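(* Consider the POMCP++ simulation process described in the context with $0<\epsilon_a<1$ and $\epsilon_z<0$, run for infinitely many simulation episodes (so the root is visited infinitely often). Then with probability $1$, every node that is ever created in the search tree is visited infinitely often.
   Context: POMCP++ builds a search tree whose nodes alternate between belief nodes (the root, or histories $h=(\bm a_0,\bm z_0,\dots,\bm z_t)$ ending with a measurement) and belief-action nodes (histories $h\bm a$ ending with an action). The action set $\mathcal A_m$ is finite. The process runs an infinite sequence of simulation episodes; each episode starts at the root and descends. At an already expanded belief node $h$ (a "visit" of $h$), an action is selected by the $\epsilon$-greedy rule: with probability $1-\epsilon_a$ the action maximizing the current value estimate $V(h\bm a)$ is chosen, and with probability $\epsilon_a$ an action is chosen uniformly at random from $\mathcal A_m$, the randomization being drawn freshly and independently of the past at each visit; the episode then visits $h\bm a$. At a belief-action node $h\bm a$ having $c$ existing child belief nodes, with probability $(c+1)^{\epsilon_z}$ (where $\epsilon_z<0$ is a parameter) a new measurement is sampled from a continuous distribution and a new child belief node $h\bm a\bm z$ is created (almost surely distinct from existing children), after which the descent stops (a rollout is performed); otherwise one of the $c$ existing children is chosen uniformly at random and the descent continues into it (a visit of that child). A newly reached unexpanded belief node is expanded (its belief-action children are created) and the descent stops. Descent also stops at depths $d$ with $\gamma^d<\epsilon$ for fixed $\gamma\in(0,1)$, $\epsilon>0$. *)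

theory Defs
  imports "HOL-Probability.Probability"
begin

text \<open>
Actions are labelled 0,...,m-1.  A belief node is identified with its history, a list of
pairs (action, index of measurement child): because new measurements are drawn from a
continuous distribution they are almost surely distinct, so the k-th created child of a
belief-action node h a is named by the index k.
\<close>

type_synonym bnode = "(nat \<times> nat) list"

datatype node = B bnode | BA bnode nat

record tree =
  created :: "bnode set"
  expanded :: "bnode set"       \<comment> \<open>belief nodes whose belief-action children were created\<close>
  nch :: "bnode \<Rightarrow> nat \<Rightarrow> nat"  \<comment> \<open>number of child belief nodes of the node h a\<close>

definition init_tree :: tree where
  "init_tree = \<lparr>created = {[]}, expanded = {}, nch = (\<lambda>_ _. 0)\<rparr>"

text \<open>Randomness of one episode: u k j (j = 0..3) is the j-th fresh uniform [0,1] draw used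
at depth k.  g is the greedy choice (argmax of the current value estimates) in this episode.
The descent returns the new tree and the set of nodes visited in this episode.
The first argument is fuel (never exhausted when started with cutoff_depth + 1).\<close>

fun descend ::
  "nat \<Rightarrow> real \<Rightarrow> real \<Rightarrow> real \<Rightarrow> real \<Rightarrow> nat \<Rightarrow> (bnode \<Rightarrow> nat) \<Rightarrow> (nat \<Rightarrow> nat \<Rightarrow> real)
   \<Rightarrow> tree \<Rightarrow> bnode \<Rightarrow> nat \<Rightarrow> tree \<times> node set" where
  "descend m ea ez \<gamma> \<epsilon> 0 g u T h k = (T, {B h})"
| "descend m ea ez \<gamma> \<epsilon> (Suc f) g u T h k =
    (if \<gamma> ^ k < \<epsilon> then (T, {B h})
     else if h \<notin> expanded T then (T\<lparr>expanded := insert h (expanded T)\<rparr>, {B h})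
     else
       (let a = (if u k 0 < ea then min (m - 1) (nat \<lfloor>u k 1 * real m\<rfloor>) else g h);
            c = nch T h a
        in if c = 0 \<or> u k 2 < (real c + 1) powr ez
           then (T\<lparr>created := insert (h @ [(a, c)]) (created T),
                   nch := (nch T)(h := (nch T h)(a := Suc c))\<rparr>, {B h, BA h a})
           else
             (let i = min (c - 1) (nat \<lfloor>u k 3 * real c\<rfloor>);
                  r = descend m ea ez \<gamma> \<epsilon> f g u T (h @ [(a, i)]) (Suc k)
              in (fst r, snd r \<union> {B h, BA h a}))))"

definition cutoff_depth :: "real \<Rightarrow> real \<Rightarrow> nat" where
  "cutoff_depth \<gamma> \<epsilon> = (LEAST d. \<gamma> ^ d < \<epsilon>)"

text \<open>The random source: i.i.d. uniform [0,1] variables indexed by (episode, depth, slot).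
Slots 0..3 are used by the descent; the remaining slots are free (e.g. for rollouts, on which
the value estimates, hence the greedy choice, may depend).\<close>

type_synonym rsrc = "nat \<times> nat \<times> nat \<Rightarrow> real"

definition Omega :: "rsrc measure" where
  "Omega = PiM UNIV (\<lambda>_. uniform_measure lborel {0..1::real})"

fun pomcp_tree ::
  "nat \<Rightarrow> real \<Rightarrow> real \<Rightarrow> real \<Rightarrow> real \<Rightarrow> (nat \<Rightarrow> bnode \<Rightarrow> rsrc \<Rightarrow> nat) \<Rightarrow> rsrc \<Rightarrow> nat \<Rightarrow> tree" where
  "pomcp_tree m ea ez \<gamma> \<epsilon> G \<omega> 0 = init_tree"
| "pomcp_tree m ea ez \<gamma> \<epsilon> G \<omega> (Suc n) =
     fst (descend m ea ez \<gamma> \<epsilon> (Suc (cutoff_depth \<gamma> \<epsilon>)) (\<lambda>h. G n h \<omega>) (\<lambda>k j. \<omega> (n, k, j))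
            (pomcp_tree m ea ez \<gamma> \<epsilon> G \<omega> n) [] 0)"

text \<open>Nodes visited in episode n (episodes numbered from 0).\<close>
definition pomcp_visited ::
  "nat \<Rightarrow> real \<Rightarrow> real \<Rightarrow> real \<Rightarrow> real \<Rightarrow> (nat \<Rightarrow> bnode \<Rightarrow> rsrc \<Rightarrow> nat) \<Rightarrow> rsrc \<Rightarrow> nat \<Rightarrow> node set" where
  "pomcp_visited m ea ez \<gamma> \<epsilon> G \<omega> n =
     snd (descend m ea ez \<gamma> \<epsilon> (Suc (cutoff_depth \<gamma> \<epsilon>)) (\<lambda>h. G n h \<omega>) (\<lambda>k j. \<omega> (n, k, j))
            (pomcp_tree m ea ez \<gamma> \<epsilon> G \<omega> n) [] 0)"

definition tree_nodes :: "nat \<Rightarrow> tree \<Rightarrow> node set" where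
  "tree_nodes m T = B ` created T \<union> {BA h a | h a. h \<in> expanded T \<and> a < m}"

end

theory Submission
  imports Defs
begin

text \<open>
  Fix a node \<open>h\<close> of the tree. At every later visit of \<open>h\<close>, a fixed action \<open>a\<close> is chosen with
  probability at least \<open>ea / m\<close>, independently of the past; and once \<open>h a\<close> has \<open>c > i\<close> children, the
  descent re-enters its \<open>i\<close>-th child with probability at least \<open>(ea / m) (1 - 2 powr ez) / c\<close>, where
  \<open>c\<close> grows at most by one per visit. Since these conditional probabilities are not summable, a
  conditional form of the second Borel--Cantelli lemma shows that almost surely infinitely many
  visits of a node entail infinitely many visits of each of its children; induction on the depth of
  the node gives the theorem. Conditioning on the past is realised by redrawing only the uniform
  draws used at one depth of one episode, which leaves the product measure invariant.
\<close>

section \<open>Independent uniform draws\<close>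

abbreviation unif01 :: "real measure" where
  "unif01 \<equiv> uniform_measure lborel {0..1::real}"

lemma prob_space_unif01: "prob_space unif01"
  by (intro prob_space_uniform_measure) auto

lemma space_Omega [simp]: "space Omega = UNIV"
  by (simp add: Omega_def space_PiM)

lemma prob_space_Omega: "prob_space Omega"
  unfolding Omega_def by (intro prob_space_PiM prob_space_unif01)

interpretation Pr: prob_space Omega
  by (rule prob_space_Omega)

lemma measurable_coordinate [measurable]: "(\<lambda>\<omega>. \<omega> i) \<in> borel_measurable Omega"
proof -
  have "(\<lambda>\<omega>. \<omega> i) \<in> measurable (PiM UNIV (\<lambda>_. unif01)) unif01"
    by (rule measurable_component_singleton) simp
  then show ?thesis
    unfolding Omega_def using measurable_cong_sets[OF refl, of unif01 borel] by simp
qed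

lemma prod_emb_unif01_eq_cylinder:
  "prod_emb UNIV (\<lambda>_. unif01) J (Pi\<^sub>E J A) = {y. \<forall>i\<in>J. y i \<in> A i}"
  by (auto simp: prod_emb_def PiE_iff)

lemma cylinder_sets_Omega:
  assumes "finite J" and "\<And>i. i \<in> J \<Longrightarrow> A i \<in> sets borel"
  shows "{y. \<forall>i\<in>J. y i \<in> A i} \<in> sets Omega"
proof -
  have "prod_emb UNIV (\<lambda>_. unif01) J (Pi\<^sub>E J A) \<in> sets Omega"
    unfolding Omega_def using assms by (intro sets_PiM_I) auto
  then show ?thesis by (simp only: prod_emb_unif01_eq_cylinder)
qed

lemma emeasure_Omega_cylinder:
  assumes "finite J" and "\<And>i. i \<in> J \<Longrightarrow> A i \<in> sets borel"
  shows "emeasure Omega {y. \<forall>i\<in>J. y i \<in> A i} = (\<Prod>i\<in>J. emeasure unif01 (A i))"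
proof -
  have "emeasure Omega (prod_emb UNIV (\<lambda>_. unif01) J (Pi\<^sub>E J A)) = (\<Prod>i\<in>J. emeasure unif01 (A i))"
    unfolding Omega_def using assms by (intro emeasure_PiM_emb prob_space_unif01) auto
  then show ?thesis by (simp only: prod_emb_unif01_eq_cylinder)
qed

lemma measure_Omega_cylinder:
  assumes "finite J" and "\<And>i. i \<in> J \<Longrightarrow> A i \<in> sets borel"
  shows "measure Omega {y. \<forall>i\<in>J. y i \<in> A i} = (\<Prod>i\<in>J. measure unif01 (A i))"
proof -
  interpret unif01: prob_space unif01 by (rule prob_space_unif01)
  have "ennreal (measure Omega {y. \<forall>i\<in>J. y i \<in> A i}) = (\<Prod>i\<in>J. ennreal (measure unif01 (A i)))"
    using emeasure_Omega_cylinder[OF assms]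
    by (simp add: Pr.emeasure_eq_measure unif01.emeasure_eq_measure)
  also have "\<dots> = ennreal (\<Prod>i\<in>J. measure unif01 (A i))"
    by (rule prod_ennreal) simp
  finally show ?thesis
    by (subst (asm) ennreal_inj) (auto intro: prod_nonneg)
qed

lemma measure_unif01_atLeastLessThan:
  "0 \<le> a \<Longrightarrow> a \<le> b \<Longrightarrow> b \<le> 1 \<Longrightarrow> measure unif01 {a..<b} = b - a"
proof -
  assume "0 \<le> a" "a \<le> b" "b \<le> 1"
  moreover have "{0..1::real} \<inter> {a..<b} = {a..<b}" using \<open>0 \<le> a\<close> \<open>b \<le> 1\<close> by auto
  ultimately show ?thesis by (subst measure_uniform_measure) auto
qed

lemma measure_unif01_lessThan:
  "0 \<le> a \<Longrightarrow> a \<le> 1 \<Longrightarrow> measure unif01 {..<a} = a"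
proof -
  assume "0 \<le> a" "a \<le> 1"
  moreover have "{0..1::real} \<inter> {..<a} = {0..<a}" using \<open>a \<le> 1\<close> by auto
  ultimately show ?thesis by (subst measure_uniform_measure) auto
qed

lemma measure_unif01_atLeast:
  "0 \<le> a \<Longrightarrow> a \<le> 1 \<Longrightarrow> measure unif01 {a..} = 1 - a"
proof -
  assume "0 \<le> a" "a \<le> 1"
  moreover have "{0..1::real} \<inter> {a..} = {a..1}" using \<open>0 \<le> a\<close> by auto
  ultimately show ?thesis by (subst measure_uniform_measure) auto
qed

lemma measure_unif01_cell:
  assumes "i < c"
  shows "measure unif01 {real i / real c..<(real i + 1) / real c} = 1 / real c"
proof -
  have "measure unif01 {real i / real c..<(real i + 1) / real c} = (real i + 1) / real c - real i / real c"
    using assms by (intro measure_unif01_atLeastLessThan) (auto simp: divide_right_mono)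
  also have "\<dots> = 1 / real c"
    by (simp add: diff_divide_distrib[symmetric])
  finally show ?thesis .
qed

lemma nat_floor_mult_cell:
  fixes y :: real and c i :: nat
  assumes "0 < c" "real i / real c \<le> y" "y < (real i + 1) / real c"
  shows "nat \<lfloor>y * real c\<rfloor> = i"
proof -
  have "real i \<le> y * real c" "y * real c < real i + 1"
    using assms by (auto simp: field_simps)
  then have "\<lfloor>y * real c\<rfloor> = int i" by (intro floor_unique) auto
  then show ?thesis by simp
qed

lemma measure_Collect_not_le:
  assumes "Measurable.pred Omega P" and "E \<in> sets Omega" and "\<And>y. y \<in> E \<Longrightarrow> P y"
  shows "measure Omega {y. \<not> P y} \<le> 1 - measure Omega E"
proof -
  have "measure Omega {y. \<not> P y} \<le> measure Omega (space Omega - E)"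
    using assms sets.compl_sets[OF assms(2)] by (intro Pr.finite_measure_mono) auto
  then show ?thesis using Pr.prob_compl[OF assms(2)] by simp
qed

definition redraw :: "nat \<Rightarrow> nat \<Rightarrow> rsrc \<Rightarrow> rsrc \<Rightarrow> rsrc" where
  "redraw k N x y = (\<lambda>i. if fst i = N \<and> fst (snd i) = k then y i else x i)"

lemma redraw_other: "n' \<noteq> N \<or> k' \<noteq> k \<Longrightarrow> redraw k N x y (n', k', j) = x (n', k', j)"
  by (auto simp: redraw_def)

lemma redraw_same [simp]: "redraw k N x y (N, k, j) = y (N, k, j)"
  by (simp add: redraw_def)

lemma measurable_redraw:
  "(\<lambda>p. redraw k N (fst p) (snd p)) \<in> measurable (Omega \<Otimes>\<^sub>M Omega) Omega"
proof -
  have "(\<lambda>p. redraw k N (fst p) (snd p)) \<in> measurable (Omega \<Otimes>\<^sub>M Omega) (PiM UNIV (\<lambda>_. unif01))"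
  proof (rule measurable_PiM_single')
    fix i :: "nat \<times> nat \<times> nat"
    have "(\<lambda>p. (fst p :: rsrc) i) \<in> measurable (Omega \<Otimes>\<^sub>M Omega) unif01"
      and "(\<lambda>p. (snd p :: rsrc) i) \<in> measurable (Omega \<Otimes>\<^sub>M Omega) unif01"
      using measurable_coordinate[of i] by (simp_all add: measurable_cong_sets[OF refl, of unif01 borel])
    then show "(\<lambda>p. redraw k N (fst p) (snd p) i) \<in> measurable (Omega \<Otimes>\<^sub>M Omega) unif01"
      by (simp add: redraw_def)
  qed (simp add: space_PiM)
  then show ?thesis by (simp only: Omega_def)
qed

lemma measurable_redraw_right: "redraw k N x \<in> measurable Omega Omega"
proof -
  have "(\<lambda>y. (x, y)) \<in> measurable Omega (Omega \<Otimes>\<^sub>M Omega)" by measurable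
  from measurable_compose[OF this measurable_redraw] show ?thesis by simp
qed

lemma Collect_in_sets_Omega: "Measurable.pred Omega P \<Longrightarrow> {\<omega>. P \<omega>} \<in> sets Omega"
  by (simp add: pred_def)

lemma measurable_pred_redraw:
  "Measurable.pred Omega P \<Longrightarrow> Measurable.pred Omega (\<lambda>y. P (redraw k N x y))"
  by (rule measurable_compose[OF measurable_redraw_right])

text \<open>This invariance is what lets us compute conditional probabilities given all the other draws.\<close>

lemma distr_redraw_Omega:
  "distr (Omega \<Otimes>\<^sub>M Omega) Omega (\<lambda>p. redraw k N (fst p) (snd p)) = Omega"
proof -
  define D where "D = {i :: nat \<times> nat \<times> nat. fst i = N \<and> fst (snd i) = k}"
  let ?r = "\<lambda>p. redraw k N (fst p) (snd p)"
  let ?P = "PiM UNIV (\<lambda>_. unif01) :: rsrc measure"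
  have "?P = distr (Omega \<Otimes>\<^sub>M Omega) ?P ?r"
  proof (rule measure_eqI_PiM_infinite)
    show "finite_measure ?P"
      unfolding Omega_def[symmetric] by (rule Pr.finite_measure_axioms)
    fix J :: "(nat \<times> nat \<times> nat) set" and A
    assume J: "finite J" "J \<subseteq> UNIV" and A: "\<And>i. i \<in> J \<Longrightarrow> A i \<in> sets unif01"
    have A': "\<And>i. i \<in> J \<Longrightarrow> A i \<in> sets borel" using A by simp
    have J': "finite (J - D)" "finite (J \<inter> D)" "\<And>i. i \<in> J - D \<Longrightarrow> A i \<in> sets borel"
      "\<And>i. i \<in> J \<inter> D \<Longrightarrow> A i \<in> sets borel" using J A' by auto
    have "emeasure ?P {y. \<forall>i\<in>J. y i \<in> A i} = (\<Prod>i\<in>J. emeasure unif01 (A i))"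
      using emeasure_Omega_cylinder[OF J(1) A'] unfolding Omega_def .
    also have "\<dots> = (\<Prod>i\<in>J - D. emeasure unif01 (A i)) * (\<Prod>i\<in>J \<inter> D. emeasure unif01 (A i))"
      by (subst prod.Int_Diff[OF J(1), of _ D]) (rule mult.commute)
    also have "\<dots> = emeasure Omega {x. \<forall>i\<in>J - D. x i \<in> A i} * emeasure Omega {y. \<forall>i\<in>J \<inter> D. y i \<in> A i}"
      using J' by (simp only: emeasure_Omega_cylinder)
    also have "\<dots> = emeasure (Omega \<Otimes>\<^sub>M Omega)
        ({x. \<forall>i\<in>J - D. x i \<in> A i} \<times> {y. \<forall>i\<in>J \<inter> D. y i \<in> A i})"
      using J' by (intro Pr.emeasure_pair_measure_Times[symmetric] cylinder_sets_Omega)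
    also have "\<dots> = emeasure (distr (Omega \<Otimes>\<^sub>M Omega) ?P ?r) {y. \<forall>i\<in>J. y i \<in> A i}"
    proof -
      have "?r \<in> measurable (Omega \<Otimes>\<^sub>M Omega) ?P"
        using measurable_redraw by (simp only: Omega_def)
      moreover have "{y. \<forall>i\<in>J. y i \<in> A i} \<in> sets ?P"
        using cylinder_sets_Omega[of J A] J A by (simp add: Omega_def)
      moreover have "?r -` {y. \<forall>i\<in>J. y i \<in> A i} \<inter> space (Omega \<Otimes>\<^sub>M Omega)
          = {x. \<forall>i\<in>J - D. x i \<in> A i} \<times> {y. \<forall>i\<in>J \<inter> D. y i \<in> A i}"
        by (auto simp: redraw_def D_def space_pair_measure)
      ultimately show ?thesis
        by (simp only: emeasure_distr)
    qed
    finally show "emeasure ?P (prod_emb UNIV (\<lambda>_. unif01) J (Pi\<^sub>E J A))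
        = emeasure (distr (Omega \<Otimes>\<^sub>M Omega) ?P ?r) (prod_emb UNIV (\<lambda>_. unif01) J (Pi\<^sub>E J A))"
      unfolding prod_emb_unif01_eq_cylinder .
  qed simp_all
  then show ?thesis unfolding Omega_def by (rule sym)
qed

lemma measure_redraw_le:
  assumes P: "Measurable.pred Omega P" and A: "A \<in> sets Omega"
    and A_redraw: "\<And>x y. redraw k N x y \<in> A \<longleftrightarrow> x \<in> A"
    and bound: "\<And>x. x \<in> A \<Longrightarrow> measure Omega {y. P (redraw k N x y)} \<le> p"
    and p: "0 \<le> p"
  shows "measure Omega (A \<inter> {\<omega>. P \<omega>}) \<le> p * measure Omega A"
proof -
  let ?X = "A \<inter> {\<omega>. P \<omega>}"
  let ?Z = "(\<lambda>p. redraw k N (fst p) (snd p)) -` ?X \<inter> space (Omega \<Otimes>\<^sub>M Omega)"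
  have X: "?X \<in> sets Omega" using P A by measurable
  have Z: "?Z \<in> sets (Omega \<Otimes>\<^sub>M Omega)" by (rule measurable_sets[OF measurable_redraw X])
  have "emeasure Omega ?X = emeasure (Omega \<Otimes>\<^sub>M Omega) ?Z"
    using emeasure_distr[OF measurable_redraw X] by (simp only: distr_redraw_Omega)
  also have "\<dots> = (\<integral>\<^sup>+x. emeasure Omega (Pair x -` ?Z) \<partial>Omega)"
    by (rule Pr.emeasure_pair_measure_alt[OF Z])
  also have "\<dots> \<le> (\<integral>\<^sup>+x. ennreal p * indicator A x \<partial>Omega)"
  proof (rule nn_integral_mono)
    fix x :: rsrc
    have "Pair x -` ?Z = (if x \<in> A then {y. P (redraw k N x y)} else {})"
      using A_redraw[of x] by (auto simp: space_pair_measure)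
    then show "emeasure Omega (Pair x -` ?Z) \<le> ennreal p * indicator A x"
      using bound[of x] by (auto simp: Pr.emeasure_eq_measure intro!: ennreal_leI)
  qed
  also have "\<dots> = ennreal (p * measure Omega A)"
    using A p by (simp add: nn_integral_cmult_indicator Pr.emeasure_eq_measure ennreal_mult)
  finally show ?thesis
    using p by (simp add: Pr.emeasure_eq_measure)
qed

section \<open>A conditional Borel--Cantelli lemma\<close>

lemma card_filter_atLeastLessThan_Suc:
  "n0 \<le> N \<Longrightarrow> card {n\<in>{n0..<Suc N}. P n} = card {n\<in>{n0..<N}. P n} + (if P N then 1 else 0)"
proof -
  assume "n0 \<le> N"
  then have "{n\<in>{n0..<Suc N}. P n} = (if P N then insert N {n\<in>{n0..<N}. P n} else {n\<in>{n0..<N}. P n})"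
    by (auto simp: less_Suc_eq)
  then show ?thesis by simp
qed

text \<open>Read \<open>T n\<close> as ``a trial takes place at time \<open>n\<close>'' and \<open>S n\<close> as ``it succeeds''. The failure
  bound says: given all draws except those at depth \<open>k\<close> of episode \<open>N\<close>, a trial at time \<open>N\<close> that
  follows \<open>r\<close> trials since \<open>n0\<close> without success succeeds with probability at least \<open>q r\<close>.\<close>

locale trial_sequence =
  fixes T S :: "nat \<Rightarrow> rsrc \<Rightarrow> bool" and k :: nat and q :: "nat \<Rightarrow> real" and n0 :: nat
  assumes measurable_trial [measurable]: "\<And>n. Measurable.pred Omega (T n)"
    and measurable_success [measurable]: "\<And>n. Measurable.pred Omega (S n)"
    and trial_redraw: "\<And>n N x y. n \<le> N \<Longrightarrow> T n (redraw k N x y) = T n x"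
    and success_redraw: "\<And>n N x y. n < N \<Longrightarrow> S n (redraw k N x y) = S n x"
    and q_nonneg: "\<And>r. 0 \<le> q r" and q_less_1: "\<And>r. q r < 1" and q_not_summable: "\<not> summable q"
    and failure_bound: "\<And>N x. n0 \<le> N \<Longrightarrow> T N x \<Longrightarrow> (\<forall>n\<in>{n0..<N}. \<not> S n x) \<Longrightarrow>
      measure Omega {y. \<not> S N (redraw k N x y)} \<le> 1 - q (card {n\<in>{n0..<N}. T n x})"
begin

definition trials :: "nat \<Rightarrow> rsrc \<Rightarrow> nat" where
  "trials N \<omega> = card {n\<in>{n0..<N}. T n \<omega>}"

definition silent :: "nat \<Rightarrow> nat \<Rightarrow> rsrc set" where
  "silent N r = {\<omega>. (\<forall>n\<in>{n0..<N}. \<not> S n \<omega>) \<and> trials N \<omega> = r}"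

lemma measurable_real_trials [measurable]: "(\<lambda>\<omega>. real (trials N \<omega>)) \<in> borel_measurable Omega"
proof -
  have "real (trials N \<omega>) = (\<Sum>n\<in>{n0..<N}. if T n \<omega> then 1 else 0)" for \<omega>
    unfolding trials_def card_eq_sum sum.inter_filter[OF finite_atLeastLessThan] of_nat_sum
    by (intro sum.cong) auto
  then show ?thesis by simp
qed

lemma measurable_trials_eq [measurable]: "Measurable.pred Omega (\<lambda>\<omega>. trials N \<omega> = r)"
proof -
  have "Measurable.pred Omega (\<lambda>\<omega>. real (trials N \<omega>) = real r)" by measurable
  then show ?thesis by simp
qed

lemma measurable_trials_ge [measurable]: "Measurable.pred Omega (\<lambda>\<omega>. K \<le> trials N \<omega>)"
proof -
  have "Measurable.pred Omega (\<lambda>\<omega>. real K \<le> real (trials N \<omega>))" by measurable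
  then show ?thesis by simp
qed

lemma trial_sets [simp]: "{\<omega>. T n \<omega>} \<in> sets Omega"
  using measurable_trial by (simp add: pred_def)

lemma silent_sets [measurable, simp]: "silent N r \<in> sets Omega"
proof -
  have "Measurable.pred Omega (\<lambda>\<omega>. (\<forall>n\<in>{n0..<N}. \<not> S n \<omega>) \<and> trials N \<omega> = r)" by measurable
  then show ?thesis by (simp add: pred_def silent_def)
qed

lemma silent_trial_failure_sets [simp]:
  "silent N r \<inter> {\<omega>. T N \<omega>} \<inter> {\<omega>. \<not> S N \<omega>} \<in> sets Omega"
  by measurable

lemma trials_le: "trials N \<omega> \<le> N"
proof -
  have "trials N \<omega> \<le> card {n0..<N}" unfolding trials_def by (rule card_mono) auto
  then show ?thesis by simp
qed

lemma trials_mono: "N \<le> N' \<Longrightarrow> trials N \<omega> \<le> trials N' \<omega>"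
  unfolding trials_def by (rule card_mono) auto

lemma trials_Suc: "n0 \<le> N \<Longrightarrow> trials (Suc N) \<omega> = trials N \<omega> + (if T N \<omega> then 1 else 0)"
  unfolding trials_def by (rule card_filter_atLeastLessThan_Suc)

lemma silent_redraw: "redraw k N x y \<in> silent N r \<longleftrightarrow> x \<in> silent N r"
proof -
  have "trials N (redraw k N x y) = trials N x"
    unfolding trials_def using trial_redraw by (intro arg_cong[where f = card]) auto
  then show ?thesis unfolding silent_def using success_redraw by auto
qed

lemma silent_empty: "N < r \<Longrightarrow> silent N r = {}"
  using trials_le by (auto simp: silent_def not_le[symmetric])

lemma silent_start: "silent n0 r = (if r = 0 then UNIV else {})"
  by (auto simp: silent_def trials_def)

lemma silent_Suc_subset:
  "n0 \<le> N \<Longrightarrow> silent (Suc N) r \<subseteq> (silent N r - {\<omega>. T N \<omega>}) \<union>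
     (if r = 0 then {} else silent N (r - 1) \<inter> {\<omega>. T N \<omega>} \<inter> {\<omega>. \<not> S N \<omega>})"
  by (auto simp: silent_def trials_Suc split: if_splits)

lemma measure_silent_failure_le:
  assumes "n0 \<le> N"
  shows "measure Omega (silent N r \<inter> {\<omega>. T N \<omega>} \<inter> {\<omega>. \<not> S N \<omega>})
    \<le> (1 - q r) * measure Omega (silent N r \<inter> {\<omega>. T N \<omega>})"
proof -
  have "measure Omega ((silent N r \<inter> {\<omega>. T N \<omega>}) \<inter> {\<omega>. \<not> S N \<omega>})
      \<le> (1 - q r) * measure Omega (silent N r \<inter> {\<omega>. T N \<omega>})"
  proof (rule measure_redraw_le[where k = k and N = N])
    show "redraw k N x y \<in> silent N r \<inter> {\<omega>. T N \<omega>} \<longleftrightarrow> x \<in> silent N r \<inter> {\<omega>. T N \<omega>}" for x y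
      using silent_redraw trial_redraw[of N N] by auto
    show "measure Omega {y. \<not> S N (redraw k N x y)} \<le> 1 - q r"
      if "x \<in> silent N r \<inter> {\<omega>. T N \<omega>}" for x
      using that failure_bound[OF assms, of x] by (simp add: silent_def trials_def)
    show "0 \<le> 1 - q r" using q_less_1[of r] by simp
  qed measurable
  then show ?thesis by (simp add: Int_assoc)
qed

definition survival :: "nat \<Rightarrow> real" where
  "survival r = (\<Prod>j<r. 1 - q j)"

lemma survival_pos: "0 < survival r"
  unfolding survival_def using q_less_1 by (intro prod_pos) (auto simp: algebra_simps)

lemma survival_Suc: "survival (Suc r) = survival r * (1 - q r)"
  by (simp add: survival_def)

lemma survival_antimono: "K \<le> r \<Longrightarrow> survival r \<le> survival K"
proof (induction r rule: dec_induct)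
  case (step r)
  have "survival (Suc r) \<le> survival r"
    unfolding survival_Suc using survival_pos[of r] q_nonneg[of r] by (simp add: mult_left_le)
  then show ?case using step by simp
qed simp

lemma survival_le_exp: "survival K \<le> exp (- (\<Sum>j<K. q j))"
proof (induction K)
  case (Suc K)
  have "1 - q K \<le> exp (- q K)" using exp_ge_add_one_self[of "- q K"] by simp
  then have "survival K * (1 - q K) \<le> exp (- (\<Sum>j<K. q j)) * exp (- q K)"
    using Suc survival_pos[of K] q_less_1[of K] by (intro mult_mono) auto
  then show ?case by (simp add: survival_Suc exp_add[symmetric])
qed (simp add: survival_def)

lemma survival_eventually_less: "0 < e \<Longrightarrow> \<exists>K. survival K < e"
proof (rule ccontr)
  assume e: "0 < e" and "\<not> (\<exists>K. survival K < e)"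
  then have "e \<le> exp (- (\<Sum>j<K. q j))" for K
    using survival_le_exp[of K] by (meson le_less_trans not_le)
  then have bound: "(\<Sum>j<K. q j) \<le> - ln e" for K
    using e ln_le_cancel_iff[of e "exp (- (\<Sum>j<K. q j))"] by simp
  have "summable q"
    using bound[of "Suc _"] q_nonneg by (intro bounded_imp_summable[where B = "- ln e"]) (auto simp: lessThan_Suc_atMost)
  then show False using q_not_summable by simp
qed

text \<open>The potential is a weighted mass of the silent histories; the weights \<open>1 / survival r\<close>
  exactly compensate the failure bound, so the potential cannot increase.\<close>

definition potential :: "nat \<Rightarrow> real" where
  "potential N = (\<Sum>r\<le>N. measure Omega (silent N r) / survival r)"

lemma measure_silent_Suc_le:
  assumes "n0 \<le> N"
  shows "measure Omega (silent (Suc N) r) \<le> measure Omega (silent N r - {\<omega>. T N \<omega>}) +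
     (if r = 0 then 0 else (1 - q (r - 1)) * measure Omega (silent N (r - 1) \<inter> {\<omega>. T N \<omega>}))"
proof (cases "r = 0")
  case True
  then show ?thesis
    using silent_Suc_subset[OF assms, of r] by (auto intro!: Pr.finite_measure_mono sets.Diff)
next
  case False
  have "measure Omega (silent (Suc N) r) \<le> measure Omega ((silent N r - {\<omega>. T N \<omega>})
      \<union> (silent N (r - 1) \<inter> {\<omega>. T N \<omega>} \<inter> {\<omega>. \<not> S N \<omega>}))"
    using silent_Suc_subset[OF assms, of r] False
    by (intro Pr.finite_measure_mono sets.Un sets.Diff) auto
  also have "\<dots> \<le> measure Omega (silent N r - {\<omega>. T N \<omega>})
      + measure Omega (silent N (r - 1) \<inter> {\<omega>. T N \<omega>} \<inter> {\<omega>. \<not> S N \<omega>})"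
    by (rule measure_Un_le) auto
  also have "\<dots> \<le> measure Omega (silent N r - {\<omega>. T N \<omega>})
      + (1 - q (r - 1)) * measure Omega (silent N (r - 1) \<inter> {\<omega>. T N \<omega>})"
    using measure_silent_failure_le[OF assms, of "r - 1"] by simp
  finally show ?thesis using False by simp
qed

lemma potential_Suc_le:
  assumes "n0 \<le> N"
  shows "potential (Suc N) \<le> potential N"
proof -
  define b where "b r = measure Omega (silent N r - {\<omega>. T N \<omega>})" for r
  define c where "c r = measure Omega (silent N r \<inter> {\<omega>. T N \<omega>})" for r
  have split: "measure Omega (silent N r) = b r + c r" for r
    using Pr.finite_measure_Diff'[of "silent N r" "{\<omega>. T N \<omega>}"] unfolding b_def c_def by simp
  have each: "measure Omega (silent (Suc N) r) / survival r
      \<le> b r / survival r + (if r = 0 then 0 else c (r - 1) / survival (r - 1))" for r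
  proof (cases r)
    case 0
    then show ?thesis
      using measure_silent_Suc_le[OF assms, of r] survival_pos[of r] unfolding b_def
      by (simp add: divide_right_mono)
  next
    case (Suc r')
    have "measure Omega (silent (Suc N) r) / survival r \<le> (b r + (1 - q r') * c r') / survival r"
      using measure_silent_Suc_le[OF assms, of r] survival_pos[of r] unfolding b_def c_def Suc
      by (simp add: divide_right_mono)
    also have "\<dots> = b r / survival r + c r' / survival r'"
      using survival_pos[of r'] q_less_1[of r'] unfolding Suc survival_Suc by (simp add: field_simps)
    finally show ?thesis using Suc by simp
  qed
  have "potential (Suc N) \<le> (\<Sum>r\<le>Suc N. b r / survival r) + (\<Sum>r\<le>Suc N. if r = 0 then 0 else c (r - 1) / survival (r - 1))"
    unfolding potential_def sum.distrib[symmetric] by (intro sum_mono each)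
  also have "(\<Sum>r\<le>Suc N. if r = 0 then 0 else c (r - 1) / survival (r - 1)) = (\<Sum>r\<le>N. c r / survival r)"
    by (subst sum.atMost_Suc_shift) simp
  also have "(\<Sum>r\<le>Suc N. b r / survival r) = (\<Sum>r\<le>N. b r / survival r)"
    using silent_empty[of N "Suc N"] by (simp add: b_def)
  also have "(\<Sum>r\<le>N. b r / survival r) + (\<Sum>r\<le>N. c r / survival r) = potential N"
    unfolding potential_def split by (simp add: sum.distrib[symmetric] add_divide_distrib)
  finally show ?thesis .
qed

lemma potential_le_1: "n0 \<le> N \<Longrightarrow> potential N \<le> 1"
proof (induction N rule: dec_induct)
  case base
  have "potential n0 = (\<Sum>r\<le>n0. if r = 0 then 1 else 0)"
    unfolding potential_def silent_start by (intro sum.cong) (auto simp: survival_def Pr.prob_space[simplified])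
  then show ?case by simp
next
  case (step N)
  then show ?case using potential_Suc_le[of N] by simp
qed

lemma measure_silent_many_trials_le:
  assumes "n0 \<le> N"
  shows "measure Omega {\<omega>. (\<forall>n\<in>{n0..<N}. \<not> S n \<omega>) \<and> K \<le> trials N \<omega>} \<le> survival K"
proof -
  have "{\<omega>. (\<forall>n\<in>{n0..<N}. \<not> S n \<omega>) \<and> K \<le> trials N \<omega>} \<subseteq> (\<Union>r\<in>{K..N}. silent N r)"
    using trials_le by (auto simp: silent_def)
  then have "measure Omega {\<omega>. (\<forall>n\<in>{n0..<N}. \<not> S n \<omega>) \<and> K \<le> trials N \<omega>}
      \<le> measure Omega (\<Union>r\<in>{K..N}. silent N r)"
    by (intro Pr.finite_measure_mono sets.finite_UN) auto
  also have "\<dots> \<le> (\<Sum>r\<in>{K..N}. measure Omega (silent N r))"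
    by (rule Pr.finite_measure_subadditive_finite) auto
  also have "\<dots> \<le> (\<Sum>r\<in>{K..N}. survival K * (measure Omega (silent N r) / survival r))"
  proof (rule sum_mono)
    fix r assume "r \<in> {K..N}"
    then have "measure Omega (silent N r) * survival r \<le> measure Omega (silent N r) * survival K"
      by (intro mult_left_mono survival_antimono) auto
    then show "measure Omega (silent N r) \<le> survival K * (measure Omega (silent N r) / survival r)"
      using survival_pos[of r] by (simp add: field_simps)
  qed
  also have "\<dots> \<le> survival K * potential N"
    unfolding potential_def sum_distrib_left[symmetric] using survival_pos
    by (intro mult_left_mono sum_mono2) (auto intro: less_imp_le divide_nonneg_pos)
  also have "\<dots> \<le> survival K"
    using potential_le_1[OF assms] survival_pos[of K] by (simp add: mult_left_le)
  finally show ?thesis .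
qed

definition silent_forever :: "nat \<Rightarrow> nat \<Rightarrow> rsrc set" where
  "silent_forever K N = {\<omega>. (\<forall>n\<ge>n0. \<not> S n \<omega>) \<and> K \<le> trials N \<omega>}"

lemma silent_forever_sets [measurable]: "silent_forever K N \<in> sets Omega"
proof -
  have "Measurable.pred Omega (\<lambda>\<omega>. (\<forall>n\<ge>n0. \<not> S n \<omega>) \<and> K \<le> trials N \<omega>)" by measurable
  then show ?thesis by (simp add: pred_def silent_forever_def)
qed

lemma measure_UN_silent_forever_le: "measure Omega (\<Union>N. silent_forever K N) \<le> survival K"
proof -
  have "measure Omega (silent_forever K N) \<le> survival K" for N
  proof -
    have "silent_forever K N \<subseteq> {\<omega>. (\<forall>n\<in>{n0..<max N n0}. \<not> S n \<omega>) \<and> K \<le> trials (max N n0) \<omega>}"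
      unfolding silent_forever_def using trials_mono[of N "max N n0"] by (fastforce intro: order_trans)
    moreover have "Measurable.pred Omega (\<lambda>\<omega>. (\<forall>n\<in>{n0..<max N n0}. \<not> S n \<omega>) \<and> K \<le> trials (max N n0) \<omega>)"
      by measurable
    ultimately show ?thesis
      by (intro order_trans[OF Pr.finite_measure_mono measure_silent_many_trials_le]) (auto simp: pred_def)
  qed
  moreover have "incseq (silent_forever K)"
    unfolding incseq_def silent_forever_def using trials_mono by (auto intro: le_trans)
  ultimately show ?thesis
    by (intro LIMSEQ_le_const2[OF Pr.finite_Lim_measure_incseq]) auto
qed

lemma infinite_imp_trials_ge:
  assumes "infinite {n. T n \<omega>}" shows "\<exists>N. K \<le> trials N \<omega>"
proof -
  have "{n. T n \<omega>} \<subseteq> {n. T n \<omega> \<and> n0 \<le> n} \<union> {..<n0}" by auto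
  then have "infinite {n. T n \<omega> \<and> n0 \<le> n}" using assms finite_subset by blast
  then obtain F where F: "F \<subseteq> {n. T n \<omega> \<and> n0 \<le> n}" "finite F" "card F = K"
    using infinite_arbitrarily_large by blast
  then have "F \<subseteq> {n\<in>{n0..<Suc (Max F)}. T n \<omega>}"
    by (auto simp: le_imp_less_Suc)
  then have "card F \<le> trials (Suc (Max F)) \<omega>"
    unfolding trials_def by (intro card_mono) auto
  then show ?thesis using F by auto
qed

lemma AE_success_after: "AE \<omega> in Omega. infinite {n. T n \<omega>} \<longrightarrow> (\<exists>n\<ge>n0. S n \<omega>)"
proof (rule AE_I')
  let ?Z = "\<Inter>K. \<Union>N. silent_forever K N"
  have "measure Omega ?Z \<le> survival K" for K
    using measure_UN_silent_forever_le[of K] by (rule order_trans[rotated]) (intro Pr.finite_measure_mono, auto)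
  then have "measure Omega ?Z = 0"
    using survival_eventually_less[of "measure Omega ?Z"] measure_nonneg[of Omega ?Z]
    by (cases "measure Omega ?Z = 0") (auto simp: not_le[symmetric])
  then show "?Z \<in> null_sets Omega"
    by (simp add: Pr.emeasure_eq_measure null_sets_def)
  show "{\<omega> \<in> space Omega. \<not> (infinite {n. T n \<omega>} \<longrightarrow> (\<exists>n\<ge>n0. S n \<omega>))} \<subseteq> ?Z"
  proof
    fix \<omega> assume "\<omega> \<in> {\<omega> \<in> space Omega. \<not> (infinite {n. T n \<omega>} \<longrightarrow> (\<exists>n\<ge>n0. S n \<omega>))}"
    then have infinite: "infinite {n. T n \<omega>}" and never: "\<forall>n\<ge>n0. \<not> S n \<omega>" by auto
    show "\<omega> \<in> ?Z"
    proof
      fix K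
      obtain N where "K \<le> trials N \<omega>" using infinite_imp_trials_ge[OF infinite] by blast
      then show "\<omega> \<in> (\<Union>N. silent_forever K N)" using never by (auto simp: silent_forever_def)
    qed
  qed
qed

end

lemma AE_infinite_trials_imp_infinite_successes:
  fixes T S :: "nat \<Rightarrow> rsrc \<Rightarrow> bool" and q :: "nat \<Rightarrow> nat \<Rightarrow> real"
  assumes "\<And>n. Measurable.pred Omega (T n)" and "\<And>n. Measurable.pred Omega (S n)"
    and "\<And>n N x y. n \<le> N \<Longrightarrow> T n (redraw k N x y) = T n x"
    and "\<And>n N x y. n < N \<Longrightarrow> S n (redraw k N x y) = S n x"
    and "\<And>n0 r. 0 \<le> q n0 r" and "\<And>n0 r. q n0 r < 1" and "\<And>n0. \<not> summable (q n0)"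
    and "\<And>n0 N x. n0 \<le> N \<Longrightarrow> T N x \<Longrightarrow> (\<forall>n\<in>{n0..<N}. \<not> S n x) \<Longrightarrow>
      measure Omega {y. \<not> S N (redraw k N x y)} \<le> 1 - q n0 (card {n\<in>{n0..<N}. T n x})"
  shows "AE \<omega> in Omega. infinite {n. T n \<omega>} \<longrightarrow> infinite {n. S n \<omega>}"
proof -
  have "AE \<omega> in Omega. infinite {n. T n \<omega>} \<longrightarrow> (\<exists>n\<ge>n0. S n \<omega>)" for n0
    using trial_sequence.AE_success_after[of T S k "q n0" n0] assms by (simp add: trial_sequence_def)
  then have "AE \<omega> in Omega. \<forall>n0. infinite {n. T n \<omega>} \<longrightarrow> (\<exists>n\<ge>n0. S n \<omega>)"
    by (subst AE_all_countable) auto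
  then show ?thesis
    by eventually_elim (auto simp: infinite_nat_iff_unbounded_le)
qed

section \<open>One simulation episode\<close>

declare descend.simps [simp del]

type_synonym greedy_choice = "bnode \<Rightarrow> nat"
type_synonym episode_draws = "nat \<Rightarrow> nat \<Rightarrow> real"

locale descent =
  fixes m :: nat and ea ez \<gamma> \<epsilon> :: real
  assumes gamma_pos: "0 < \<gamma>" and gamma_less_1: "\<gamma> < 1" and eps_pos: "0 < \<epsilon>"
begin

abbreviation horizon :: nat where "horizon \<equiv> cutoff_depth \<gamma> \<epsilon>"

lemma pow_less_eps_iff: "\<gamma> ^ k < \<epsilon> \<longleftrightarrow> horizon \<le> k"
proof
  assume "\<gamma> ^ k < \<epsilon>" then show "horizon \<le> k" unfolding cutoff_depth_def by (rule Least_le)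
next
  assume "horizon \<le> k"
  obtain n where "\<gamma> ^ n < \<epsilon>" using real_arch_pow_inv[OF eps_pos gamma_less_1] by blast
  then have "\<gamma> ^ horizon < \<epsilon>" unfolding cutoff_depth_def by (rule LeastI)
  moreover have "\<gamma> ^ k \<le> \<gamma> ^ horizon" using \<open>horizon \<le> k\<close> gamma_pos gamma_less_1 by (intro power_decreasing) auto
  ultimately show "\<gamma> ^ k < \<epsilon>" by simp
qed

definition chosen_action :: "greedy_choice \<Rightarrow> episode_draws \<Rightarrow> bnode \<Rightarrow> nat" where
  "chosen_action g u h = (if u (length h) 0 < ea then min (m - 1) (nat \<lfloor>u (length h) 1 * real m\<rfloor>) else g h)"

definition chosen_child :: "episode_draws \<Rightarrow> nat \<Rightarrow> nat \<Rightarrow> nat" where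
  "chosen_child u k c = min (c - 1) (nat \<lfloor>u k 3 * real c\<rfloor>)"

definition descends :: "tree \<Rightarrow> greedy_choice \<Rightarrow> episode_draws \<Rightarrow> bnode \<Rightarrow> nat \<times> nat \<Rightarrow> bool" where
  "descends T g u h x = (\<not> \<gamma> ^ length h < \<epsilon> \<and> h \<in> expanded T \<and> chosen_action g u h = fst x \<and>
     nch T h (fst x) \<noteq> 0 \<and> \<not> u (length h) 2 < (real (nch T h (fst x)) + 1) powr ez \<and>
     chosen_child u (length h) (nch T h (fst x)) = snd x)"

definition creates :: "tree \<Rightarrow> greedy_choice \<Rightarrow> episode_draws \<Rightarrow> bnode \<Rightarrow> nat \<Rightarrow> bool" where
  "creates T g u h a = (\<not> \<gamma> ^ length h < \<epsilon> \<and> h \<in> expanded T \<and> chosen_action g u h = a \<and>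
     (nch T h a = 0 \<or> u (length h) 2 < (real (nch T h a) + 1) powr ez))"

fun path_from :: "tree \<Rightarrow> greedy_choice \<Rightarrow> episode_draws \<Rightarrow> bnode \<Rightarrow> (nat \<times> nat) list \<Rightarrow> bool" where
  "path_from T g u h0 [] = True"
| "path_from T g u h0 (x # t) = (descends T g u h0 x \<and> path_from T g u (h0 @ [x]) t)"

definition on_descent :: "tree \<Rightarrow> greedy_choice \<Rightarrow> episode_draws \<Rightarrow> bnode \<Rightarrow> bnode \<Rightarrow> bool" where
  "on_descent T g u h0 h = (\<exists>t. h = h0 @ t \<and> path_from T g u h0 t)"

lemma on_descent_iff: "on_descent T g u h0 h \<longleftrightarrow> h = h0 \<or> (\<exists>x. descends T g u h0 x \<and> on_descent T g u (h0 @ [x]) h)"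
proof
  assume "on_descent T g u h0 h"
  then obtain t where t: "h = h0 @ t" "path_from T g u h0 t" by (auto simp: on_descent_def)
  show "h = h0 \<or> (\<exists>x. descends T g u h0 x \<and> on_descent T g u (h0 @ [x]) h)"
  proof (cases t)
    case Nil then show ?thesis using t by simp
  next
    case (Cons x t')
    then show ?thesis using t by (intro disjI2 exI[of _ x]) (auto simp: on_descent_def)
  qed
next
  assume "h = h0 \<or> (\<exists>x. descends T g u h0 x \<and> on_descent T g u (h0 @ [x]) h)"
  then show "on_descent T g u h0 h"
  proof
    assume "h = h0" then show ?thesis unfolding on_descent_def by (intro exI[of _ "[]"]) simp
  next
    assume "\<exists>x. descends T g u h0 x \<and> on_descent T g u (h0 @ [x]) h"
    then obtain x t where "descends T g u h0 x" "h = h0 @ [x] @ t" "path_from T g u (h0 @ [x]) t"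
      by (auto simp: on_descent_def)
    then show ?thesis unfolding on_descent_def by (intro exI[of _ "x # t"]) simp
  qed
qed

definition descent_outcome :: "tree \<Rightarrow> greedy_choice \<Rightarrow> episode_draws \<Rightarrow> bnode \<Rightarrow> tree \<times> node set \<Rightarrow> bool" where
  "descent_outcome T g u h0 R \<longleftrightarrow>
     (\<forall>h. B h \<in> snd R \<longleftrightarrow> on_descent T g u h0 h) \<and>
     (\<forall>h a. BA h a \<in> snd R \<longleftrightarrow>
        on_descent T g u h0 h \<and> \<not> \<gamma> ^ length h < \<epsilon> \<and> h \<in> expanded T \<and> chosen_action g u h = a) \<and>
     expanded (fst R) = expanded T \<union> {h. on_descent T g u h0 h \<and> \<not> \<gamma> ^ length h < \<epsilon>} \<and>
     (\<forall>h a. nch (fst R) h a = nch T h a + (if on_descent T g u h0 h \<and> creates T g u h a then 1 else 0)) \<and>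
     created (fst R) = created T \<union> {h @ [(a, nch T h a)] | h a. on_descent T g u h0 h \<and> creates T g u h a}"

lemma descent_outcome_Cons:
  assumes R: "descent_outcome T g u (h0 @ [x]) R"
    and descends_iff: "\<And>y. descends T g u h0 y \<longleftrightarrow> y = x"
    and no_creation: "\<And>a. \<not> creates T g u h0 a"
  shows "descent_outcome T g u h0 (fst R, snd R \<union> {B h0, BA h0 (fst x)})"
proof -
  have x: "\<not> \<gamma> ^ length h0 < \<epsilon>" "h0 \<in> expanded T" "chosen_action g u h0 = fst x"
    using descends_iff[of x] by (auto simp: descends_def)
  have "on_descent T g u h0 h \<longleftrightarrow> h = h0 \<or> on_descent T g u (h0 @ [x]) h" for h
    by (subst on_descent_iff) (auto simp: descends_iff)
  then show ?thesis
    using R x no_creation unfolding descent_outcome_def by (intro conjI) auto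
qed

lemma descend_char:
  "length h0 = k \<Longrightarrow> horizon \<le> k + f \<Longrightarrow>
    descent_outcome T g u h0 (descend m ea ez \<gamma> \<epsilon> (Suc f) g u T h0 k)"
proof (induction f arbitrary: h0 k rule: less_induct)
  case (less f)
  let ?R = "descend m ea ez \<gamma> \<epsilon> (Suc f) g u T h0 k"
  define a where "a = chosen_action g u h0"
  define c where "c = nch T h0 a"
  have a: "(if u k 0 < ea then min (m - 1) (nat \<lfloor>u k 1 * real m\<rfloor>) else g h0) = a"
    using less.prems by (simp add: a_def chosen_action_def)
  consider (cut) "\<gamma> ^ k < \<epsilon>" | (unexpanded) "\<not> \<gamma> ^ k < \<epsilon>" "h0 \<notin> expanded T"
    | (create) "\<not> \<gamma> ^ k < \<epsilon>" "h0 \<in> expanded T" "c = 0 \<or> u k 2 < (real c + 1) powr ez"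
    | (continue) "\<not> \<gamma> ^ k < \<epsilon>" "h0 \<in> expanded T" "\<not> (c = 0 \<or> u k 2 < (real c + 1) powr ez)"
    by blast
  then show ?case
  proof cases
    case cut
    have "on_descent T g u h0 h \<longleftrightarrow> h = h0" for h
      using cut less.prems by (subst on_descent_iff) (auto simp: descends_def)
    then show ?thesis
      using cut less.prems by (auto simp: descent_outcome_def creates_def descend.simps)
  next
    case unexpanded
    have "on_descent T g u h0 h \<longleftrightarrow> h = h0" for h
      using unexpanded by (subst on_descent_iff) (auto simp: descends_def)
    then show ?thesis
      using unexpanded less.prems by (auto simp: descent_outcome_def creates_def descend.simps)
  next
    case create
    have "on_descent T g u h0 h \<longleftrightarrow> h = h0" for h
      using create less.prems by (subst on_descent_iff) (auto simp: descends_def a_def c_def)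
    moreover have "creates T g u h0 a' \<longleftrightarrow> a' = a" for a'
      using create less.prems by (auto simp: creates_def a_def c_def)
    moreover have "?R = (T\<lparr>created := insert (h0 @ [(a, c)]) (created T),
        nch := (nch T)(h0 := (nch T h0)(a := Suc c))\<rparr>, {B h0, BA h0 a})"
      using create by (simp add: a c_def Let_def descend.simps)
    ultimately show ?thesis
      using create less.prems by (auto simp: descent_outcome_def a_def c_def)
  next
    case continue
    define i where "i = chosen_child u k c"
    obtain f' where f': "f = Suc f'"
      using continue less.prems pow_less_eps_iff by (cases f) auto
    have "descent_outcome T g u (h0 @ [(a, i)]) (descend m ea ez \<gamma> \<epsilon> (Suc f') g u T (h0 @ [(a, i)]) (Suc k))"
      using less.prems f' by (intro less.IH) auto
    moreover have "descends T g u h0 x \<longleftrightarrow> x = (a, i)" for x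
      using continue less.prems by (cases x) (auto simp: descends_def a_def c_def i_def)
    moreover have "\<not> creates T g u h0 a'" for a'
      using continue less.prems by (auto simp: creates_def a_def c_def)
    ultimately have "descent_outcome T g u h0 (fst (descend m ea ez \<gamma> \<epsilon> (Suc f') g u T (h0 @ [(a, i)]) (Suc k)),
        snd (descend m ea ez \<gamma> \<epsilon> (Suc f') g u T (h0 @ [(a, i)]) (Suc k)) \<union> {B h0, BA h0 a})"
      by (rule descent_outcome_Cons[where x = "(a, i)", unfolded fst_conv])
    moreover have "min (nch T h0 a - Suc 0) (nat \<lfloor>u k 3 * real (nch T h0 a)\<rfloor>) = i"
      by (simp add: i_def chosen_child_def c_def)
    ultimately show ?thesis
      using continue by (subst descend.simps(2)) (simp add: a c_def Let_def f')
  qed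
qed

lemma path_from_snoc: "path_from T g u h0 (t @ [x]) \<longleftrightarrow> path_from T g u h0 t \<and> descends T g u (h0 @ t) x"
  by (induction t arbitrary: h0) auto

lemma on_descent_Nil_iff: "on_descent T g u [] h \<longleftrightarrow> path_from T g u [] h"
  by (simp add: on_descent_def)

lemma on_descent_snoc: "on_descent T g u [] (h @ [x]) \<longleftrightarrow> on_descent T g u [] h \<and> descends T g u h x"
  by (simp add: on_descent_Nil_iff path_from_snoc)

lemma path_from_cong:
  assumes "\<And>k'. k' < length h0 + length t \<Longrightarrow> u k' = u' k'"
  shows "path_from T g u h0 t = path_from T g u' h0 t"
  using assms
proof (induction t arbitrary: h0)
  case Nil then show ?case by simp
next
  case (Cons x t)
  have "u (length h0) = u' (length h0)" using Cons.prems by simp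
  then have "descends T g u h0 x = descends T g u' h0 x" by (simp add: descends_def chosen_action_def chosen_child_def)
  moreover have "path_from T g u (h0 @ [x]) t = path_from T g u' (h0 @ [x]) t"
    using Cons.prems by (intro Cons.IH) auto
  ultimately show ?case by simp
qed

lemma descends_imp:
  "descends T g u h (a, i) \<Longrightarrow> h \<in> expanded T \<and> i < nch T h a \<and> chosen_action g u h = a \<and> \<not> \<gamma> ^ length h < \<epsilon>"
  by (auto simp: descends_def chosen_child_def)

definition wf_tree :: "tree \<Rightarrow> bool" where
  "wf_tree T = ([] \<in> created T \<and> (\<forall>h\<in>expanded T. h \<in> created T \<and> \<not> \<gamma> ^ length h < \<epsilon>) \<and>
     (\<forall>h a i. h @ [(a, i)] \<in> created T \<longleftrightarrow> h \<in> expanded T \<and> i < nch T h a) \<and>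
     (\<forall>h a. 0 < nch T h a \<longrightarrow> h \<in> expanded T))"

lemma wf_init_tree: "wf_tree init_tree"
  by (auto simp: wf_tree_def init_tree_def)

lemma on_descent_created: "wf_tree T \<Longrightarrow> on_descent T g u [] h \<Longrightarrow> h \<in> created T"
proof (induction h rule: rev_induct)
  case Nil then show ?case by (simp add: wf_tree_def)
next
  case (snoc x h)
  obtain a i where x: "x = (a, i)" by (cases x)
  have "descends T g u h (a, i)" using snoc.prems by (simp add: on_descent_snoc x)
  then have "h \<in> expanded T \<and> i < nch T h a" by (simp add: descends_imp)
  then show ?case using snoc.prems(1) by (simp add: wf_tree_def x)
qed

lemma creates_imp: "creates T g u h a \<Longrightarrow> h \<in> expanded T \<and> \<not> \<gamma> ^ length h < \<epsilon> \<and> chosen_action g u h = a"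
  by (simp add: creates_def)

abbreviation episode_tree :: "greedy_choice \<Rightarrow> episode_draws \<Rightarrow> tree \<Rightarrow> tree" where
  "episode_tree g u T \<equiv> fst (descend m ea ez \<gamma> \<epsilon> (Suc horizon) g u T [] 0)"

abbreviation episode_visits :: "greedy_choice \<Rightarrow> episode_draws \<Rightarrow> tree \<Rightarrow> node set" where
  "episode_visits g u T \<equiv> snd (descend m ea ez \<gamma> \<epsilon> (Suc horizon) g u T [] 0)"

lemma episode_outcome: "descent_outcome T g u [] (descend m ea ez \<gamma> \<epsilon> (Suc horizon) g u T [] 0)"
  by (rule descend_char) auto

lemma B_mem_episode_visits: "B h \<in> episode_visits g u T \<longleftrightarrow> on_descent T g u [] h"
  using episode_outcome[of T g u] unfolding descent_outcome_def by blast

lemma BA_mem_episode_visits: "BA h a \<in> episode_visits g u T \<longleftrightarrow>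
    on_descent T g u [] h \<and> \<not> \<gamma> ^ length h < \<epsilon> \<and> h \<in> expanded T \<and> chosen_action g u h = a"
  using episode_outcome[of T g u] unfolding descent_outcome_def by blast
lemma expanded_episode_tree: "expanded (episode_tree g u T) = expanded T \<union> {h. on_descent T g u [] h \<and> \<not> \<gamma> ^ length h < \<epsilon>}"
  using episode_outcome[of T g u] unfolding descent_outcome_def by blast
lemma nch_episode_tree: "nch (episode_tree g u T) h a = nch T h a + (if on_descent T g u [] h \<and> creates T g u h a then 1 else 0)"
  using episode_outcome[of T g u] unfolding descent_outcome_def by blast
lemma created_episode_tree: "created (episode_tree g u T) = created T \<union> {h @ [(a, nch T h a)] | h a. on_descent T g u [] h \<and> creates T g u h a}"
  using episode_outcome[of T g u] unfolding descent_outcome_def by blast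

lemma wf_episode_tree:
  assumes I: "wf_tree T" shows "wf_tree (episode_tree g u T)"
proof -
  let ?T = "episode_tree g u T"
  have I1: "[] \<in> created T" and I2: "\<forall>h\<in>expanded T. h \<in> created T \<and> \<not> \<gamma> ^ length h < \<epsilon>"
    and I3: "\<And>h a i. h @ [(a, i)] \<in> created T \<longleftrightarrow> h \<in> expanded T \<and> i < nch T h a"
    and I4: "\<And>h a. 0 < nch T h a \<Longrightarrow> h \<in> expanded T"
    using I unfolding wf_tree_def by blast+
  have "[] \<in> created ?T" using I1 by (simp add: created_episode_tree)
  moreover have "\<forall>h\<in>expanded ?T. h \<in> created ?T \<and> \<not> \<gamma> ^ length h < \<epsilon>"
    using I2 on_descent_created[OF I] by (auto simp: expanded_episode_tree created_episode_tree)
  moreover have "h @ [(a, i)] \<in> created ?T \<longleftrightarrow> h \<in> expanded ?T \<and> i < nch ?T h a" for h a i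
  proof
    assume "h @ [(a, i)] \<in> created ?T"
    then consider "h @ [(a, i)] \<in> created T" | "on_descent T g u [] h \<and> creates T g u h a \<and> i = nch T h a"
      by (auto simp: created_episode_tree)
    then show "h \<in> expanded ?T \<and> i < nch ?T h a"
    proof cases
      case 1 then show ?thesis using I3 by (auto simp: expanded_episode_tree nch_episode_tree)
    next
      case 2 then show ?thesis using creates_imp by (auto simp: expanded_episode_tree nch_episode_tree)
    qed
  next
    assume h: "h \<in> expanded ?T \<and> i < nch ?T h a"
    show "h @ [(a, i)] \<in> created ?T"
    proof (cases "on_descent T g u [] h \<and> creates T g u h a")
      case True
      then have ex: "h \<in> expanded T" using creates_imp by blast
      have "i < nch T h a \<or> i = nch T h a" using h True by (auto simp: nch_episode_tree)
      then show ?thesis using True ex I3 by (auto simp: created_episode_tree)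
    next
      case False
      then have "i < nch T h a" using h by (auto simp: nch_episode_tree split: if_splits)
      then have "h \<in> expanded T" using I4[of h a] by simp
      then show ?thesis using I3 \<open>i < nch T h a\<close> by (auto simp: created_episode_tree)
    qed
  qed
  moreover have "0 < nch ?T h a \<longrightarrow> h \<in> expanded ?T" for h a
    using I4 creates_imp by (auto simp: nch_episode_tree expanded_episode_tree split: if_splits)
  ultimately show ?thesis unfolding wf_tree_def by blast
qed

lemma episode_tree_mono: "expanded T \<subseteq> expanded (episode_tree g u T)" "created T \<subseteq> created (episode_tree g u T)"
  "nch T h a \<le> nch (episode_tree g u T) h a" "nch (episode_tree g u T) h a \<le> nch T h a + 1"
  by (auto simp: expanded_episode_tree created_episode_tree nch_episode_tree)

end

section \<open>The simulation process\<close>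

lemma measurable_count_space_comp:
  "f \<in> measurable M (count_space UNIV) \<Longrightarrow> (\<lambda>\<omega>. F (f \<omega>)) \<in> measurable M (count_space UNIV)"
  by (rule measurable_compose[OF _ measurable_count_space])

lemma measurable_floor_count_space:
  "f \<in> borel_measurable M \<Longrightarrow> (\<lambda>\<omega>. \<lfloor>f \<omega> :: real\<rfloor>) \<in> measurable M (count_space UNIV)"
  by (rule measurable_compose[OF _ measurable_real_floor])

lemma not_summable_shifted_harmonic:
  assumes "C \<noteq> 0"
  shows "\<not> summable (\<lambda>r. C / real (d + r))"
proof
  assume "summable (\<lambda>r. C / real (d + r))"
  then have "summable (\<lambda>r. (\<lambda>n. C * inverse (real n)) (r + d))"
    by (simp add: field_simps add.commute)
  then have "summable (\<lambda>n. C * inverse (real n))"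
    by (subst (asm) summable_iff_shift)
  then have "summable (\<lambda>n. inverse (real n))"
    using assms by simp
  then show False
    using not_summable_harmonic by blast
qed

lemma infinite_imp_infinite_eventually:
  assumes "infinite {n::nat. P n}" and "\<And>n. n0 \<le> n \<Longrightarrow> P n \<Longrightarrow> Q n"
  shows "infinite {n. Q n}"
proof
  assume "finite {n. Q n}"
  moreover have "{n. P n} \<subseteq> {n. Q n} \<union> {..<n0}" using assms(2) by (auto simp: not_le[symmetric])
  ultimately show False using assms(1) finite_subset by blast
qed

locale pomcp = descent m ea ez \<gamma> \<epsilon> for m ea ez \<gamma> \<epsilon> +
  fixes G :: "nat \<Rightarrow> bnode \<Rightarrow> rsrc \<Rightarrow> nat"
  assumes m_pos: "0 < m" and ea_pos: "0 < ea" and ea_less_1: "ea < 1" and ez_neg: "ez < 0"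
  and G_less: "\<And>n h \<omega>. G n h \<omega> < m"
  and G_cong: "\<And>n h \<omega> \<omega>'. (\<And>n' k j. n' < n \<Longrightarrow> \<omega> (n', k, j) = \<omega>' (n', k, j))
    \<Longrightarrow> G n h \<omega> = G n h \<omega>'"
  and measurable_G: "\<And>n h. (\<lambda>\<omega>. G n h \<omega>) \<in> measurable Omega (count_space UNIV)"
begin

definition tree_at :: "rsrc \<Rightarrow> nat \<Rightarrow> tree" where
  "tree_at \<omega> n = pomcp_tree m ea ez \<gamma> \<epsilon> G \<omega> n"

definition greedy_at :: "nat \<Rightarrow> rsrc \<Rightarrow> greedy_choice" where
  "greedy_at n \<omega> = (\<lambda>h. G n h \<omega>)"

definition draws_at :: "nat \<Rightarrow> rsrc \<Rightarrow> episode_draws" where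
  "draws_at n \<omega> = (\<lambda>k j. \<omega> (n, k, j))"

definition on_path :: "nat \<Rightarrow> rsrc \<Rightarrow> bnode \<Rightarrow> bool" where
  "on_path n \<omega> h \<longleftrightarrow> on_descent (tree_at \<omega> n) (greedy_at n \<omega>) (draws_at n \<omega>) [] h"

definition action_at :: "nat \<Rightarrow> rsrc \<Rightarrow> bnode \<Rightarrow> nat" where
  "action_at n \<omega> h = chosen_action (greedy_at n \<omega>) (draws_at n \<omega>) h"

lemma tree_at_0: "tree_at \<omega> 0 = init_tree"
  by (simp add: tree_at_def)

lemma tree_at_Suc: "tree_at \<omega> (Suc n) = episode_tree (greedy_at n \<omega>) (draws_at n \<omega>) (tree_at \<omega> n)"
  by (simp add: tree_at_def greedy_at_def draws_at_def)

lemma pomcp_visited_eq: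
  "pomcp_visited m ea ez \<gamma> \<epsilon> G \<omega> n = episode_visits (greedy_at n \<omega>) (draws_at n \<omega>) (tree_at \<omega> n)"
  by (simp add: pomcp_visited_def tree_at_def greedy_at_def draws_at_def)

lemma B_mem_pomcp_visited: "B h \<in> pomcp_visited m ea ez \<gamma> \<epsilon> G \<omega> n \<longleftrightarrow> on_path n \<omega> h"
  by (simp add: pomcp_visited_eq B_mem_episode_visits on_path_def)

lemma BA_mem_pomcp_visited: "BA h a \<in> pomcp_visited m ea ez \<gamma> \<epsilon> G \<omega> n \<longleftrightarrow>
    on_path n \<omega> h \<and> \<not> \<gamma> ^ length h < \<epsilon> \<and> h \<in> expanded (tree_at \<omega> n) \<and> action_at n \<omega> h = a"
  by (simp add: pomcp_visited_eq BA_mem_episode_visits on_path_def action_at_def)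

lemma wf_tree_at: "wf_tree (tree_at \<omega> n)"
  by (induction n) (auto simp: tree_at_0 tree_at_Suc wf_init_tree wf_episode_tree)

lemma tree_at_mono:
  assumes "n \<le> n'"
  shows "expanded (tree_at \<omega> n) \<subseteq> expanded (tree_at \<omega> n')" "created (tree_at \<omega> n) \<subseteq> created (tree_at \<omega> n')"
    "nch (tree_at \<omega> n) h a \<le> nch (tree_at \<omega> n') h a"
proof -
  show "expanded (tree_at \<omega> n) \<subseteq> expanded (tree_at \<omega> n')" using assms
  proof (induction n' rule: dec_induct)
    case (step k) then show ?case unfolding tree_at_Suc using episode_tree_mono(1)[of "tree_at \<omega> k"] by blast
  qed simp
  show "created (tree_at \<omega> n) \<subseteq> created (tree_at \<omega> n')" using assms
  proof (induction n' rule: dec_induct)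
    case (step k) then show ?case unfolding tree_at_Suc using episode_tree_mono(2)[of "tree_at \<omega> k"] by blast
  qed simp
  show "nch (tree_at \<omega> n) h a \<le> nch (tree_at \<omega> n') h a" using assms
  proof (induction n' rule: dec_induct)
    case (step k)
    then show ?case
      unfolding tree_at_Suc using episode_tree_mono(3)[of "tree_at \<omega> k" h a "greedy_at k \<omega>" "draws_at k \<omega>"]
      by linarith
  qed simp
qed

lemma nch_tree_at_le: "nch (tree_at \<omega> n) h a \<le> n"
proof (induction n)
  case 0 then show ?case by (simp add: tree_at_0 init_tree_def)
next
  case (Suc n) then show ?case using episode_tree_mono(4)[of "greedy_at n \<omega>" "draws_at n \<omega>" "tree_at \<omega> n" h a] by (simp add: tree_at_Suc)
qed

lemma tree_at_cong: "(\<And>n' k j. n' < n \<Longrightarrow> \<omega> (n', k, j) = \<omega>' (n', k, j)) \<Longrightarrow> tree_at \<omega> n = tree_at \<omega>' n"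
proof (induction n)
  case 0 then show ?case by (simp add: tree_at_0)
next
  case (Suc n)
  have "tree_at \<omega> n = tree_at \<omega>' n" using Suc by simp
  moreover have "greedy_at n \<omega> = greedy_at n \<omega>'" unfolding greedy_at_def using Suc.prems by (intro ext G_cong) auto
  moreover have "draws_at n \<omega> = draws_at n \<omega>'" unfolding draws_at_def using Suc.prems by (intro ext) auto
  ultimately show ?case by (simp add: tree_at_Suc)
qed

lemma on_path_cong:
  assumes "\<And>n' k j. n' < n \<Longrightarrow> \<omega> (n', k, j) = \<omega>' (n', k, j)"
    and "\<And>k j. k < length h \<Longrightarrow> \<omega> (n, k, j) = \<omega>' (n, k, j)"
  shows "on_path n \<omega> h = on_path n \<omega>' h"
proof -
  have "tree_at \<omega> n = tree_at \<omega>' n" using assms(1) by (rule tree_at_cong)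
  moreover have "greedy_at n \<omega> = greedy_at n \<omega>'" unfolding greedy_at_def using assms(1) by (intro ext G_cong) auto
  moreover have "path_from (tree_at \<omega>' n) (greedy_at n \<omega>') (draws_at n \<omega>) [] h
      = path_from (tree_at \<omega>' n) (greedy_at n \<omega>') (draws_at n \<omega>') [] h"
    using assms(2) by (intro path_from_cong) (auto simp: draws_at_def)
  ultimately show ?thesis by (simp add: on_path_def on_descent_Nil_iff)
qed

lemma action_at_cong:
  assumes "\<And>n' k j. n' < n \<Longrightarrow> \<omega> (n', k, j) = \<omega>' (n', k, j)"
    and "\<And>j. \<omega> (n, length h, j) = \<omega>' (n, length h, j)"
  shows "action_at n \<omega> h = action_at n \<omega>' h"
proof -
  have "G n h \<omega> = G n h \<omega>'" using assms(1) by (intro G_cong) auto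
  then show ?thesis using assms(2) by (simp add: action_at_def chosen_action_def greedy_at_def draws_at_def)
qed

lemma measurable_action_at:
  "(\<lambda>\<omega>. action_at n \<omega> h) \<in> measurable Omega (count_space UNIV)"
proof -
  have unfolded: "action_at n \<omega> h
      = (if \<omega> (n, length h, 0) < ea then min (m - 1) (nat \<lfloor>\<omega> (n, length h, 1) * real m\<rfloor>) else G n h \<omega>)" for \<omega>
    by (simp add: action_at_def chosen_action_def greedy_at_def draws_at_def)
  have random_branch:
      "(\<lambda>\<omega>. min (m - 1) (nat \<lfloor>\<omega> (n, length h, 1) * real m\<rfloor>)) \<in> measurable Omega (count_space UNIV)"
    by (rule measurable_count_space_comp[OF measurable_floor_count_space]) measurable
  have coin: "Measurable.pred Omega (\<lambda>\<omega>. \<omega> (n, length h, 0) < ea)" by measurable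
  show ?thesis
    unfolding unfolded by (rule measurable_If[OF random_branch measurable_G coin[unfolded pred_def]])
qed

definition tree_measurable :: "nat \<Rightarrow> bool" where
  "tree_measurable n = ((\<forall>h. Measurable.pred Omega (\<lambda>\<omega>. h \<in> expanded (tree_at \<omega> n))) \<and>
     (\<forall>h a. (\<lambda>\<omega>. nch (tree_at \<omega> n) h a) \<in> measurable Omega (count_space UNIV)))"

lemma measurable_descends:
  assumes "tree_measurable n"
  shows "Measurable.pred Omega (\<lambda>\<omega>. descends (tree_at \<omega> n) (greedy_at n \<omega>) (draws_at n \<omega>) h x)"
proof -
  obtain a i where x: "x = (a, i)" by (cases x)
  have expanded_meas: "Measurable.pred Omega (\<lambda>\<omega>. h \<in> expanded (tree_at \<omega> n))"
    and nch_meas: "(\<lambda>\<omega>. nch (tree_at \<omega> n) h a) \<in> measurable Omega (count_space UNIV)"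
    using assms by (auto simp: tree_measurable_def)
  have action_meas: "Measurable.pred Omega (\<lambda>\<omega>. action_at n \<omega> h = a)"
    by (rule pred_count_space_const1[OF measurable_action_at])
  have cond: "Measurable.pred Omega (\<lambda>\<omega>. c \<noteq> 0 \<and> \<not> \<omega> (n, length h, 2) < (real c + 1) powr ez \<and>
      min (c - 1) (nat \<lfloor>\<omega> (n, length h, 3) * real c\<rfloor>) = i)" for c :: nat
  proof -
    have "(\<lambda>\<omega>. min (c - 1) (nat \<lfloor>\<omega> (n, length h, 3) * real c\<rfloor>)) \<in> measurable Omega (count_space UNIV)"
      by (rule measurable_count_space_comp[OF measurable_floor_count_space]) measurable
    then have "Measurable.pred Omega (\<lambda>\<omega>. min (c - 1) (nat \<lfloor>\<omega> (n, length h, 3) * real c\<rfloor>) = i)"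
      by (rule pred_count_space_const1)
    moreover have "Measurable.pred Omega (\<lambda>\<omega>. \<not> \<omega> (n, length h, 2) < (real c + 1) powr ez)" by measurable
    ultimately show ?thesis by measurable
  qed
  have nch_cond: "Measurable.pred Omega (\<lambda>\<omega>. nch (tree_at \<omega> n) h a \<noteq> 0
      \<and> \<not> \<omega> (n, length h, 2) < (real (nch (tree_at \<omega> n) h a) + 1) powr ez \<and>
      min (nch (tree_at \<omega> n) h a - 1) (nat \<lfloor>\<omega> (n, length h, 3) * real (nch (tree_at \<omega> n) h a)\<rfloor>) = i)"
    by (rule measurable_compose_countable[OF cond nch_meas])
  have unfolded: "descends (tree_at \<omega> n) (greedy_at n \<omega>) (draws_at n \<omega>) h x
      = (\<not> \<gamma> ^ length h < \<epsilon> \<and> h \<in> expanded (tree_at \<omega> n) \<and> action_at n \<omega> h = a \<and>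
      (nch (tree_at \<omega> n) h a \<noteq> 0 \<and> \<not> \<omega> (n, length h, 2) < (real (nch (tree_at \<omega> n) h a) + 1) powr ez \<and>
      min (nch (tree_at \<omega> n) h a - 1) (nat \<lfloor>\<omega> (n, length h, 3) * real (nch (tree_at \<omega> n) h a)\<rfloor>) = i))" for \<omega>
    by (simp add: descends_def x action_at_def draws_at_def chosen_child_def)
  show ?thesis unfolding unfolded using expanded_meas action_meas nch_cond by measurable
qed

lemma measurable_on_path_if:
  assumes "tree_measurable n"
  shows "Measurable.pred Omega (\<lambda>\<omega>. on_path n \<omega> h)"
proof (induction h rule: rev_induct)
  case Nil
  have "on_path n \<omega> [] = True" for \<omega> by (simp add: on_path_def on_descent_Nil_iff)
  then show ?case by simp
next
  case (snoc x h)
  have unfolded: "on_path n \<omega> (h @ [x])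
      \<longleftrightarrow> on_path n \<omega> h \<and> descends (tree_at \<omega> n) (greedy_at n \<omega>) (draws_at n \<omega>) h x" for \<omega>
    by (simp add: on_path_def on_descent_snoc)
  show ?case unfolding unfolded using snoc measurable_descends[OF assms] by measurable
qed

lemma measurable_creates:
  assumes "tree_measurable n"
  shows "Measurable.pred Omega (\<lambda>\<omega>. creates (tree_at \<omega> n) (greedy_at n \<omega>) (draws_at n \<omega>) h a)"
proof -
  have expanded_meas: "Measurable.pred Omega (\<lambda>\<omega>. h \<in> expanded (tree_at \<omega> n))"
    and nch_meas: "(\<lambda>\<omega>. nch (tree_at \<omega> n) h a) \<in> measurable Omega (count_space UNIV)"
    using assms by (auto simp: tree_measurable_def)
  have action_meas: "Measurable.pred Omega (\<lambda>\<omega>. action_at n \<omega> h = a)"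
    by (rule pred_count_space_const1[OF measurable_action_at])
  have cond: "Measurable.pred Omega (\<lambda>\<omega>. c = 0 \<or> \<omega> (n, length h, 2) < (real c + 1) powr ez)" for c :: nat
    by measurable
  have nch_cond: "Measurable.pred Omega
      (\<lambda>\<omega>. nch (tree_at \<omega> n) h a = 0 \<or> \<omega> (n, length h, 2) < (real (nch (tree_at \<omega> n) h a) + 1) powr ez)"
    by (rule measurable_compose_countable[OF cond nch_meas])
  have unfolded: "creates (tree_at \<omega> n) (greedy_at n \<omega>) (draws_at n \<omega>) h a
      = (\<not> \<gamma> ^ length h < \<epsilon> \<and> h \<in> expanded (tree_at \<omega> n) \<and> action_at n \<omega> h = a \<and>
      (nch (tree_at \<omega> n) h a = 0 \<or> \<omega> (n, length h, 2) < (real (nch (tree_at \<omega> n) h a) + 1) powr ez))" for \<omega>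
    by (simp add: creates_def action_at_def draws_at_def)
  show ?thesis unfolding unfolded using expanded_meas action_meas nch_cond by measurable
qed

lemma measurable_tree_at: "tree_measurable n"
proof (induction n)
  case 0
  show ?case by (simp add: tree_measurable_def tree_at_0 init_tree_def)
next
  case (Suc n)
  have "Measurable.pred Omega (\<lambda>\<omega>. h \<in> expanded (tree_at \<omega> (Suc n)))" for h
  proof -
    have unfolded: "h \<in> expanded (tree_at \<omega> (Suc n))
        \<longleftrightarrow> h \<in> expanded (tree_at \<omega> n) \<or> (on_path n \<omega> h \<and> \<not> \<gamma> ^ length h < \<epsilon>)" for \<omega>
      by (simp add: tree_at_Suc expanded_episode_tree on_path_def)
    have expanded_meas: "Measurable.pred Omega (\<lambda>\<omega>. h \<in> expanded (tree_at \<omega> n))"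
      using Suc by (simp add: tree_measurable_def)
    show ?thesis unfolding unfolded using expanded_meas measurable_on_path_if[OF Suc, of h] by measurable
  qed
  moreover have "(\<lambda>\<omega>. nch (tree_at \<omega> (Suc n)) h a) \<in> measurable Omega (count_space UNIV)" for h a
  proof -
    have unfolded: "nch (tree_at \<omega> (Suc n)) h a
        = (if on_path n \<omega> h \<and> creates (tree_at \<omega> n) (greedy_at n \<omega>) (draws_at n \<omega>) h a
           then Suc (nch (tree_at \<omega> n) h a) else nch (tree_at \<omega> n) h a)" for \<omega>
      by (simp add: tree_at_Suc nch_episode_tree on_path_def)
    have nch_meas: "(\<lambda>\<omega>. nch (tree_at \<omega> n) h a) \<in> measurable Omega (count_space UNIV)"
      using Suc by (simp add: tree_measurable_def)
    have creation: "Measurable.pred Omega (\<lambda>\<omega>. on_path n \<omega> h \<and> creates (tree_at \<omega> n) (greedy_at n \<omega>) (draws_at n \<omega>) h a)"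
      using measurable_on_path_if[OF Suc] measurable_creates[OF Suc] by measurable
    show ?thesis
      unfolding unfolded
      by (rule measurable_If[OF measurable_count_space_comp[OF nch_meas] nch_meas creation[unfolded pred_def]])
  qed
  ultimately show ?case by (simp add: tree_measurable_def)
qed

lemma measurable_expanded[measurable]: "Measurable.pred Omega (\<lambda>\<omega>. h \<in> expanded (tree_at \<omega> n))"
  using measurable_tree_at by (simp add: tree_measurable_def)
lemma measurable_nch[measurable]: "(\<lambda>\<omega>. nch (tree_at \<omega> n) h a) \<in> measurable Omega (count_space UNIV)"
  using measurable_tree_at by (simp add: tree_measurable_def)
lemma measurable_on_path[measurable]: "Measurable.pred Omega (\<lambda>\<omega>. on_path n \<omega> h)"
  using measurable_on_path_if[OF measurable_tree_at] .
lemma measurable_action_at_eq[measurable]: "Measurable.pred Omega (\<lambda>\<omega>. action_at n \<omega> h = a)"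
  by (rule pred_count_space_const1[OF measurable_action_at])

lemma on_path_Nil [simp]: "on_path n \<omega> []"
  by (simp add: on_path_def on_descent_Nil_iff)

lemma on_path_snoc:
  "on_path n \<omega> (h @ [x]) \<longleftrightarrow> on_path n \<omega> h \<and> descends (tree_at \<omega> n) (greedy_at n \<omega>) (draws_at n \<omega>) h x"
  by (simp add: on_path_def on_descent_snoc)

lemma created_snoc_tree_at:
  "h @ [(a, i)] \<in> created (tree_at \<omega> n) \<longleftrightarrow> h \<in> expanded (tree_at \<omega> n) \<and> i < nch (tree_at \<omega> n) h a"
  using wf_tree_at[of \<omega> n] by (auto simp: wf_tree_def)

lemma expanded_imp_created: "h \<in> expanded (tree_at \<omega> n) \<Longrightarrow> h \<in> created (tree_at \<omega> n)"
  using wf_tree_at[of \<omega> n] by (auto simp: wf_tree_def)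

lemma nch_pos_imp_expanded: "0 < nch (tree_at \<omega> n) h a \<Longrightarrow> h \<in> expanded (tree_at \<omega> n)"
  using wf_tree_at[of \<omega> n] by (auto simp: wf_tree_def)

lemma expanded_not_cut: "h \<in> expanded (tree_at \<omega> n) \<Longrightarrow> \<not> \<gamma> ^ length h < \<epsilon>"
  using wf_tree_at[of \<omega> n] by (auto simp: wf_tree_def)

lemma action_at_less: "action_at n \<omega> h < m"
  using m_pos G_less[of n h \<omega>] by (auto simp: action_at_def chosen_action_def greedy_at_def)

lemma nch_pos_imp_less: "0 < nch (tree_at \<omega> n) h a \<Longrightarrow> a < m"
proof (induction n)
  case (Suc n)
  show ?case
  proof (cases "on_path n \<omega> h \<and> creates (tree_at \<omega> n) (greedy_at n \<omega>) (draws_at n \<omega>) h a")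
    case True
    then have "action_at n \<omega> h = a" using creates_imp by (auto simp: action_at_def)
    then show ?thesis using action_at_less[of n \<omega> h] by simp
  next
    case False
    then show ?thesis using Suc by (auto simp: tree_at_Suc nch_episode_tree on_path_def)
  qed
qed (simp add: tree_at_0 init_tree_def)

text \<open>Children of \<open>h a\<close> are created only at visits of \<open>h\<close>, at most one per episode; once there
  are more than \<open>i\<close> of them, each such visit is counted on the right.\<close>

lemma nch_le_child_trials:
  assumes "n0 \<le> N"
  shows "nch (tree_at \<omega> N) h a
    \<le> i + 1 + n0 + card {n\<in>{n0..<N}. on_path n \<omega> h \<and> i < nch (tree_at \<omega> n) h a}"
  using assms
proof (induction N rule: dec_induct)
  case base
  then show ?case using nch_tree_at_le[of \<omega> n0 h a] by simp
next
  case (step N)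
  let ?trial = "\<lambda>n. on_path n \<omega> h \<and> i < nch (tree_at \<omega> n) h a"
  have "nch (tree_at \<omega> (Suc N)) h a = nch (tree_at \<omega> N) h a
      + (if on_path N \<omega> h \<and> creates (tree_at \<omega> N) (greedy_at N \<omega>) (draws_at N \<omega>) h a then 1 else 0)"
    by (simp add: tree_at_Suc nch_episode_tree on_path_def)
  then show ?case
    using step.IH card_filter_atLeastLessThan_Suc[OF step.hyps(1), of ?trial] by (auto split: if_splits)
qed

lemma tree_at_redraw: "n \<le> N \<Longrightarrow> tree_at (redraw k N x y) n = tree_at x n"
  by (rule tree_at_cong) (auto simp: redraw_other)

lemma on_path_redraw: "n < N \<or> (n = N \<and> length h \<le> k) \<Longrightarrow> on_path n (redraw k N x y) h = on_path n x h"
  by (rule on_path_cong) (auto simp: redraw_other)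

lemma action_at_redraw: "n < N \<Longrightarrow> action_at n (redraw k N x y) h = action_at n x h"
  by (rule action_at_cong) (auto simp: redraw_other)

lemma action_at_redraw_cell:
  assumes "a < m" "y (N, length h, 0) < ea"
    and "real a / real m \<le> y (N, length h, 1)" "y (N, length h, 1) < (real a + 1) / real m"
  shows "action_at N (redraw (length h) N x y) h = a"
proof -
  have "nat \<lfloor>y (N, length h, 1) * real m\<rfloor> = a"
    using assms m_pos by (intro nat_floor_mult_cell) auto
  then show ?thesis
    using assms by (simp add: action_at_def chosen_action_def draws_at_def redraw_def)
qed

lemma measure_action_cell:
  assumes "a < m"
  shows "measure Omega {y. y (N, k, 0) < ea \<and> real a / real m \<le> y (N, k, 1) \<and> y (N, k, 1) < (real a + 1) / real m}
    = ea / real m"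
proof -
  let ?A = "\<lambda>z :: nat \<times> nat \<times> nat. if snd (snd z) = 0 then {..<ea} else {real a / real m..<(real a + 1) / real m}"
  have "{y. y (N, k, 0) < ea \<and> real a / real m \<le> y (N, k, 1) \<and> y (N, k, 1) < (real a + 1) / real m}
      = {y. \<forall>z\<in>{(N, k, 0), (N, k, 1)}. y z \<in> ?A z}"
    by auto
  moreover have "measure Omega {y. \<forall>z\<in>{(N, k, 0), (N, k, 1)}. y z \<in> ?A z}
      = measure unif01 {..<ea} * measure unif01 {real a / real m..<(real a + 1) / real m}"
    by (subst measure_Omega_cylinder) auto
  moreover have "measure unif01 {..<ea} = ea"
    using ea_pos ea_less_1 by (intro measure_unif01_lessThan) auto
  ultimately show ?thesis
    using measure_unif01_cell[OF assms] by simp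
qed

lemma measure_action_child_cell:
  assumes "a < m" and "i < c"
  shows "measure Omega {y. y (N, k, 0) < ea \<and> real a / real m \<le> y (N, k, 1) \<and> y (N, k, 1) < (real a + 1) / real m \<and>
      (real c + 1) powr ez \<le> y (N, k, 2) \<and> real i / real c \<le> y (N, k, 3) \<and> y (N, k, 3) < (real i + 1) / real c}
    = ea / real m * (1 - (real c + 1) powr ez) / real c"
proof -
  let ?A = "\<lambda>z :: nat \<times> nat \<times> nat. if snd (snd z) = 0 then {..<ea} else if snd (snd z) = 1 then {real a / real m..<(real a + 1) / real m}
     else if snd (snd z) = 2 then {(real c + 1) powr ez..} else {real i / real c..<(real i + 1) / real c}"
  have "{y. y (N, k, 0) < ea \<and> real a / real m \<le> y (N, k, 1) \<and> y (N, k, 1) < (real a + 1) / real m \<and>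
      (real c + 1) powr ez \<le> y (N, k, 2) \<and> real i / real c \<le> y (N, k, 3) \<and> y (N, k, 3) < (real i + 1) / real c}
     = {y. \<forall>z\<in>{(N, k, 0), (N, k, 1), (N, k, 2), (N, k, 3)}. y z \<in> ?A z}"
    by auto
  moreover have "measure Omega {y. \<forall>z\<in>{(N, k, 0), (N, k, 1), (N, k, 2), (N, k, 3)}. y z \<in> ?A z}
      = measure unif01 {..<ea} * (measure unif01 {real a / real m..<(real a + 1) / real m} *
        (measure unif01 {(real c + 1) powr ez..} * measure unif01 {real i / real c..<(real i + 1) / real c}))"
    by (subst measure_Omega_cylinder) auto
  moreover have "measure unif01 {..<ea} = ea"
    using ea_pos ea_less_1 by (intro measure_unif01_lessThan) auto
  moreover have "measure unif01 {(real c + 1) powr ez..} = 1 - (real c + 1) powr ez"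
    using ez_neg powr_mono2'[of ez 1 "real c + 1"] by (intro measure_unif01_atLeast) auto
  ultimately show ?thesis
    using measure_unif01_cell[OF assms(1)] measure_unif01_cell[OF assms(2)] by simp
qed

definition expanded_visit :: "bnode \<Rightarrow> nat \<Rightarrow> rsrc \<Rightarrow> bool" where
  "expanded_visit h n \<omega> \<longleftrightarrow> on_path n \<omega> h \<and> h \<in> expanded (tree_at \<omega> n)"

definition action_visit :: "bnode \<Rightarrow> nat \<Rightarrow> nat \<Rightarrow> rsrc \<Rightarrow> bool" where
  "action_visit h a n \<omega> \<longleftrightarrow>
     on_path n \<omega> h \<and> \<not> \<gamma> ^ length h < \<epsilon> \<and> h \<in> expanded (tree_at \<omega> n) \<and> action_at n \<omega> h = a"

definition child_trial :: "bnode \<Rightarrow> nat \<Rightarrow> nat \<Rightarrow> nat \<Rightarrow> rsrc \<Rightarrow> bool" where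
  "child_trial h a i n \<omega> \<longleftrightarrow> on_path n \<omega> h \<and> i < nch (tree_at \<omega> n) h a"

lemma measurable_expanded_visit [measurable]: "Measurable.pred Omega (expanded_visit h n)"
  unfolding expanded_visit_def by measurable

lemma measurable_action_visit [measurable]: "Measurable.pred Omega (action_visit h a n)"
  unfolding action_visit_def by measurable

lemma measurable_child_trial [measurable]: "Measurable.pred Omega (child_trial h a i n)"
proof -
  have "Measurable.pred Omega (\<lambda>\<omega>. i < nch (tree_at \<omega> n) h a)"
    by (rule measurable_compose_countable[OF _ measurable_nch]) simp
  then show ?thesis unfolding child_trial_def by measurable
qed

lemma AE_action_visited:
  assumes "a < m"
  shows "AE \<omega> in Omega. infinite {n. expanded_visit h n \<omega>} \<longrightarrow> infinite {n. action_visit h a n \<omega>}"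
proof (rule AE_infinite_trials_imp_infinite_successes[where k = "length h" and q = "\<lambda>_ _. ea / real m"])
  show "expanded_visit h n (redraw (length h) N x y) = expanded_visit h n x" if "n \<le> N" for n N x y
    using that on_path_redraw[of n N h "length h" x y] by (auto simp: expanded_visit_def tree_at_redraw le_less)
  show "action_visit h a n (redraw (length h) N x y) = action_visit h a n x" if "n < N" for n N x y
    using that by (simp add: action_visit_def tree_at_redraw on_path_redraw action_at_redraw)
  show "0 \<le> ea / real m" "ea / real m < 1" for n0 r :: nat
    using ea_pos ea_less_1 m_pos by (auto simp: divide_less_eq)
  show "\<not> summable (\<lambda>_. ea / real m)" for n0
    using ea_pos m_pos by (simp add: summable_const_iff)
  fix n0 N :: nat and x
  assume x: "expanded_visit h N x"
  let ?cell = "{y :: rsrc. y (N, length h, 0) < ea \<and> real a / real m \<le> y (N, length h, 1)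
    \<and> y (N, length h, 1) < (real a + 1) / real m}"
  have "measure Omega {y. \<not> action_visit h a N (redraw (length h) N x y)} \<le> 1 - measure Omega ?cell"
  proof (rule measure_Collect_not_le)
    show "Measurable.pred Omega (\<lambda>y. action_visit h a N (redraw (length h) N x y))"
      by (intro measurable_pred_redraw) measurable
    show "?cell \<in> sets Omega"
      by (rule Collect_in_sets_Omega) measurable
    show "action_visit h a N (redraw (length h) N x y)" if "y \<in> ?cell" for y
      using x that assms expanded_not_cut[of h x N] action_at_redraw_cell[of a y N h x]
      by (auto simp: action_visit_def expanded_visit_def tree_at_redraw on_path_redraw)
  qed
  then show "measure Omega {y. \<not> action_visit h a N (redraw (length h) N x y)} \<le> 1 - ea / real m"
    using measure_action_cell[OF assms] by simp
qed measurable

text \<open>When the descent through \<open>h\<close> picks action \<open>a\<close> and does not open a new child, it enters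
  each of the \<open>c\<close> existing children with probability \<open>1 / c\<close>, and \<open>c\<close> grows at most linearly in
  the number of such visits: this is where the harmonic series comes from.\<close>

lemma measure_not_child_visit_le:
  assumes "a < m" and x: "child_trial h a i N x"
  defines "c \<equiv> nch (tree_at x N) h a"
  shows "measure Omega {y. \<not> on_path N (redraw (length h) N x y) (h @ [(a, i)])}
    \<le> 1 - ea / real m * (1 - (real c + 1) powr ez) / real c"
proof -
  let ?k = "length h"
  have ic: "i < c" using x by (simp add: child_trial_def c_def)
  let ?cell = "{y :: rsrc. y (N, ?k, 0) < ea \<and> real a / real m \<le> y (N, ?k, 1) \<and> y (N, ?k, 1) < (real a + 1) / real m \<and>
      (real c + 1) powr ez \<le> y (N, ?k, 2) \<and> real i / real c \<le> y (N, ?k, 3) \<and> y (N, ?k, 3) < (real i + 1) / real c}"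
  have "measure Omega {y. \<not> on_path N (redraw ?k N x y) (h @ [(a, i)])} \<le> 1 - measure Omega ?cell"
  proof (rule measure_Collect_not_le)
    show "Measurable.pred Omega (\<lambda>y. on_path N (redraw ?k N x y) (h @ [(a, i)]))"
      by (intro measurable_pred_redraw) measurable
    show "?cell \<in> sets Omega"
      by (rule Collect_in_sets_Omega) measurable
    fix y assume y: "y \<in> ?cell"
    have "h \<in> expanded (tree_at x N)"
      using ic by (intro nch_pos_imp_expanded[of x N h a]) (simp add: c_def)
    moreover have "nat \<lfloor>y (N, ?k, 3) * real c\<rfloor> = i"
      using y ic by (intro nat_floor_mult_cell) auto
    moreover have "action_at N (redraw ?k N x y) h = a"
      using y assms by (intro action_at_redraw_cell) auto
    ultimately have "descends (tree_at x N) (greedy_at N (redraw ?k N x y)) (draws_at N (redraw ?k N x y)) h (a, i)"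
      using y ic expanded_not_cut[of h x N]
      by (auto simp: descends_def action_at_def draws_at_def chosen_child_def c_def[symmetric])
    then show "on_path N (redraw ?k N x y) (h @ [(a, i)])"
      using x on_path_redraw[of N N h ?k x y] by (simp add: on_path_snoc child_trial_def tree_at_redraw)
  qed
  also have "\<dots> = 1 - ea / real m * (1 - (real c + 1) powr ez) / real c"
    using measure_action_child_cell[OF assms(1) ic] by simp
  finally show ?thesis .
qed

lemma AE_child_visited:
  assumes "a < m"
  shows "AE \<omega> in Omega. infinite {n. child_trial h a i n \<omega>} \<longrightarrow> infinite {n. on_path n \<omega> (h @ [(a, i)])}"
proof -
  define C where "C = ea / real m * (1 - 2 powr ez)"
  have "2 powr ez < 1" using ez_neg by (intro powr_less_one) auto
  then have C_pos: "0 < C" using ea_pos m_pos by (simp add: C_def)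
  have "C \<le> ea / real m" unfolding C_def using ea_pos by (intro mult_left_le) auto
  also have "\<dots> \<le> ea" using m_pos ea_pos by (simp add: divide_le_eq)
  finally have C: "0 < C" "C < 1" using C_pos ea_less_1 by auto
  show ?thesis
  proof (rule AE_infinite_trials_imp_infinite_successes[where k = "length h" and q = "\<lambda>n0 r. C / real (i + 1 + n0 + r)"])
    show "child_trial h a i n (redraw (length h) N x y) = child_trial h a i n x" if "n \<le> N" for n N x y
      using that on_path_redraw[of n N h "length h" x y] by (auto simp: child_trial_def tree_at_redraw le_less)
    show "on_path n (redraw (length h) N x y) (h @ [(a, i)]) = on_path n x (h @ [(a, i)])" if "n < N" for n N x y
      using that by (simp add: on_path_redraw)
    show "0 \<le> C / real (i + 1 + n0 + r)" "C / real (i + 1 + n0 + r) < 1" for n0 r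
      using C by (auto simp: divide_less_eq)
    show "\<not> summable (\<lambda>r. C / real (i + 1 + n0 + r))" for n0
      using C by (intro not_summable_shifted_harmonic) simp
    fix n0 N :: nat and x
    assume "n0 \<le> N" and x: "child_trial h a i N x"
    define c where "c = nch (tree_at x N) h a"
    have "0 < c" using x by (simp add: child_trial_def c_def)
    have "C \<le> ea / real m * (1 - (real c + 1) powr ez)"
      using ez_neg \<open>0 < c\<close> ea_pos m_pos powr_mono2'[of ez 2 "real c + 1"] unfolding C_def
      by (intro mult_left_mono) auto
    moreover have "real c \<le> real (i + 1 + n0 + card {n\<in>{n0..<N}. child_trial h a i n x})"
      using nch_le_child_trials[OF \<open>n0 \<le> N\<close>, of x h a i] by (simp add: c_def child_trial_def)
    ultimately have "C / real (i + 1 + n0 + card {n\<in>{n0..<N}. child_trial h a i n x})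
        \<le> ea / real m * (1 - (real c + 1) powr ez) / real c"
      using C \<open>0 < c\<close> by (intro frac_le) auto
    then show "measure Omega {y. \<not> on_path N (redraw (length h) N x y) (h @ [(a, i)])}
        \<le> 1 - C / real (i + 1 + n0 + card {n\<in>{n0..<N}. child_trial h a i n x})"
      using measure_not_child_visit_le[OF assms x] unfolding c_def by linarith
  qed measurable
qed

lemma AE_created_visited: "AE \<omega> in Omega. (\<exists>n. h \<in> created (tree_at \<omega> n)) \<longrightarrow> infinite {n. on_path n \<omega> h}"
proof (induction h rule: rev_induct)
  case (snoc x h)
  obtain a i where x: "x = (a, i)" by (cases x)
  show ?case
  proof (cases "a < m")
    case False
    then have "h @ [(a, i)] \<notin> created (tree_at \<omega> n)" for \<omega> n
      using nch_pos_imp_less[of \<omega> n h a] by (auto simp: created_snoc_tree_at)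
    then show ?thesis by (simp add: x)
  next
    case True
    show ?thesis
      using snoc AE_child_visited[OF True, of h i]
    proof eventually_elim
      case (elim \<omega>)
      show ?case unfolding x
      proof
        assume "\<exists>n. h @ [(a, i)] \<in> created (tree_at \<omega> n)"
        then obtain n0 where n0: "h \<in> expanded (tree_at \<omega> n0)" "i < nch (tree_at \<omega> n0) h a"
          by (auto simp: created_snoc_tree_at)
        then have "infinite {n. on_path n \<omega> h}"
          using elim(1) expanded_imp_created by blast
        then have "infinite {n. child_trial h a i n \<omega>}"
        proof (rule infinite_imp_infinite_eventually)
          fix n assume "n0 \<le> n" "on_path n \<omega> h"
          then show "child_trial h a i n \<omega>"
            using n0(2) tree_at_mono(3)[of n0 n \<omega> h a] by (simp add: child_trial_def)
        qed
        then show "infinite {n. on_path n \<omega> (h @ [(a, i)])}"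
          using elim(2) by blast
      qed
    qed
  qed
qed simp

lemma AE_expanded_action_visited:
  assumes "a < m"
  shows "AE \<omega> in Omega. (\<exists>n. h \<in> expanded (tree_at \<omega> n))
    \<longrightarrow> infinite {n. BA h a \<in> pomcp_visited m ea ez \<gamma> \<epsilon> G \<omega> n}"
  using AE_created_visited[of h] AE_action_visited[OF assms, of h]
proof eventually_elim
  case (elim \<omega>)
  show ?case
  proof
    assume "\<exists>n. h \<in> expanded (tree_at \<omega> n)"
    then obtain n0 where n0: "h \<in> expanded (tree_at \<omega> n0)" by blast
    then have "infinite {n. on_path n \<omega> h}"
      using elim(1) expanded_imp_created by blast
    then have "infinite {n. expanded_visit h n \<omega>}"
    proof (rule infinite_imp_infinite_eventually)
      fix n assume "n0 \<le> n" "on_path n \<omega> h"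
      then show "expanded_visit h n \<omega>"
        using n0 tree_at_mono(1)[of n0 n \<omega>] by (auto simp: expanded_visit_def)
    qed
    then show "infinite {n. BA h a \<in> pomcp_visited m ea ez \<gamma> \<epsilon> G \<omega> n}"
      using elim(2) by (simp add: action_visit_def BA_mem_pomcp_visited)
  qed
qed

lemma AE_every_node_visited:
  "AE \<omega> in Omega. \<forall>x. (\<exists>n. x \<in> tree_nodes m (pomcp_tree m ea ez \<gamma> \<epsilon> G \<omega> n))
            \<longrightarrow> infinite {n. x \<in> pomcp_visited m ea ez \<gamma> \<epsilon> G \<omega> n}"
proof -
  have "AE \<omega> in Omega. \<forall>h. (\<exists>n. h \<in> created (tree_at \<omega> n)) \<longrightarrow> infinite {n. on_path n \<omega> h}"
    by (subst AE_all_countable) (auto intro: AE_created_visited)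
  moreover have "AE \<omega> in Omega. \<forall>h a. a < m \<longrightarrow> (\<exists>n. h \<in> expanded (tree_at \<omega> n))
      \<longrightarrow> infinite {n. BA h a \<in> pomcp_visited m ea ez \<gamma> \<epsilon> G \<omega> n}"
    by (subst AE_all_countable, rule allI, subst AE_all_countable) (auto intro: AE_expanded_action_visited)
  ultimately show ?thesis
  proof eventually_elim
    case (elim \<omega>)
    show ?case
    proof (intro allI impI)
      fix x assume "\<exists>n. x \<in> tree_nodes m (pomcp_tree m ea ez \<gamma> \<epsilon> G \<omega> n)"
      then obtain n where n: "x \<in> tree_nodes m (tree_at \<omega> n)" by (auto simp: tree_at_def)
      show "infinite {n. x \<in> pomcp_visited m ea ez \<gamma> \<epsilon> G \<omega> n}"
      proof (cases x)
        case (B h)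
        then show ?thesis using n elim(1) by (auto simp: tree_nodes_def B_mem_pomcp_visited)
      next
        case (BA h a)
        then show ?thesis using n elim(2) by (auto simp: tree_nodes_def)
      qed
    qed
  qed
qed

end

theorem theorem1:
  fixes m :: nat and ea ez \<gamma> \<epsilon> :: real
    and G :: "nat \<Rightarrow> bnode \<Rightarrow> rsrc \<Rightarrow> nat"
  assumes "0 < m"
    and "0 < ea" and "ea < 1" and "ez < 0"
    and "0 < \<gamma>" and "\<gamma> < 1" and "0 < \<epsilon>"
    and "\<And>n h \<omega>. G n h \<omega> < m"
    and "\<And>n h \<omega> \<omega>'. (\<And>n' k j. n' < n \<Longrightarrow> \<omega> (n', k, j) = \<omega>' (n', k, j)) \<Longrightarrow> G n h \<omega> = G n h \<omega>'"
    and "\<And>n h. (\<lambda>\<omega>. G n h \<omega>) \<in> measurable Omega (count_space UNIV)"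
  shows "AE \<omega> in Omega. \<forall>x. (\<exists>n. x \<in> tree_nodes m (pomcp_tree m ea ez \<gamma> \<epsilon> G \<omega> n))
            \<longrightarrow> infinite {n. x \<in> pomcp_visited m ea ez \<gamma> \<epsilon> G \<omega> n}"
proof -
  interpret pomcp m ea ez \<gamma> \<epsilon> G
    by unfold_locales (fact assms)+
  show ?thesis
    by (rule AE_every_node_visited)
qed

end
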